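(* Let $d\ge1$ and let $\mu$ be a stochastic measure on the Borel subsets of $[0,1]^d$ such that (A2) the random function $\mu(x)=\mu\bigl(\prod_{i=1}^d[0,x_i]\bigr)$, $x\in[0,1]^d$, has continuous paths, and (A3) if $d\ge2$, then $\sum_{k=1}^\infty k^{d-2}\,\omega(\mu,2^{-k})<\infty$ a.s. Let $f:[0,1]^d\to\mathbb{R}$ be $d$ times continuously differentiable on $[0,1]^d$, and let \[ \xi(y)=\int_{\prod_{s=1}^d[0,y_s]}f(x)\,d\mu(x),\qquad y=(y_1,\dots,y_d)\in[0,1]^d. \] Then the version of $\xi$ \[ \tilde\xi(y)=\int_{\prod_{s=1}^d[0,y_s]}S^{(d)}_1(f,x)\,d\mu(x)+\sum_{k=1}^\infty\int_{\prod_{s=1}^d[0,y_s]}\bigl(S^{(d)}_{2^k}(f,x)-S^{(d)}_{2^{k-1}}(f,x)\bigr)\,d\mu(x) \] has continuous paths on $[0,1]^d$ a.s.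
   Context: Let $(\Omega,\mathcal F,\mathsf P)$ be a complete probability space and $L_0$ the set of all real random variables on it, with convergence in probability. A stochastic measure (SM) on a measurable space $(X,\mathcal B)$ is a $\sigma$-additive map $\mu:\mathcal B\to L_0$ (finitely additive, and $\mu(A_n)\to0$ in probability whenever $A_n\downarrow\emptyset$). Every bounded measurable deterministic function is integrable w.r.t. $\mu$, with $\int\sum_ic_i\mathbf 1_{A_i}d\mu=\sum_ic_i\mu(A_i)$ for simple functions. In the series defining $\tilde\xi$ all integrands are simple functions and the integrals are computed as linear combinations of values of $\mu$, using the fixed continuous version of $\mu$. For the continuous version, $\omega(\mu,r)=\sup\{|\mu(x+h)-\mu(x)|:\ x,x+h\in[0,1]^d,\ |h|\le r\}$ (Euclidean norm). One-dimensional Haar functions on $[0,1]$: $\chi_1\equiv1$; for $n=2^j+i$, $1\le i\le2^j$, $j\ge0$, put $\Delta_n^+=((i-1)2^{-j},(2i-1)2^{-j-1})$, $\Delta_n^-=((2i-1)2^{-j-1},i2^{-j})$, $\chi_n=2^{j/2}$ on $\Delta_n^+$, $-2^{j/2}$ on $\Delta_n^-$, $0$ outside $[(i-1)2^{-j},i2^{-j}]$; at discontinuity points in $(0,1)$ $\chi_n$ equals the average of its one-sided limits, $\chi_n(0)=\chi_n(0+)$, $\chi_n(1)=\chi_n(1-)$. Multivariate Haar functions $\chi^{(d)}_{n_1,\dots,n_d}(x)=\prod_{s=1}^d\chi_{n_s}(x_s)$, coefficients $c^{(d)}_{n_1,\dots,n_d}(g)=\int_{[0,1]^d}g\,\chi^{(d)}_{n_1,\dots,n_d}\,dx$,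 partial sums $S^{(d)}_{2^k}(g,x)=\sum_{(n_1,\dots,n_d)\in\{1,\dots,2^k\}^d}c^{(d)}_{n_1,\dots,n_d}(g)\chi^{(d)}_{n_1,\dots,n_d}(x)$. *)

theory Defs
  imports "HOL-Probability.Probability"
begin

definition conv_in_prob :: "'w measure \<Rightarrow> (nat \<Rightarrow> 'w \<Rightarrow> real) \<Rightarrow> ('w \<Rightarrow> real) \<Rightarrow> bool" where
  "conv_in_prob P X Y \<longleftrightarrow>
     (\<forall>e>0. (\<lambda>n. measure P {w \<in> space P. \<bar>X n w - Y w\<bar> > e}) \<longlonglongrightarrow> 0)"

text \<open>A stochastic measure on a measurable space X: a map from sets X into L0(P)
  (random variables, identified up to a.s. equality), finitely additive (a.s.)
  and continuous along decreasing sequences with empty intersection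
  (convergence in probability).\<close>
definition stochastic_measure :: "'w measure \<Rightarrow> 'x measure \<Rightarrow> ('x set \<Rightarrow> 'w \<Rightarrow> real) \<Rightarrow> bool" where
  "stochastic_measure P X \<mu> \<longleftrightarrow>
     (\<forall>A\<in>sets X. \<mu> A \<in> borel_measurable P) \<and>
     (\<forall>A\<in>sets X. \<forall>B\<in>sets X. A \<inter> B = {} \<longrightarrow> (AE w in P. \<mu> (A \<union> B) w = \<mu> A w + \<mu> B w)) \<and>
     (\<forall>An. (\<forall>n. An n \<in> sets X) \<and> decseq An \<and> (\<Inter>n. An n) = {} \<longrightarrow>
           conv_in_prob P (\<lambda>n. \<mu> (An n)) (\<lambda>_. 0))"

definition unit_cube :: "(real ^ 'd) set" where
  "unit_cube = cbox 0 (vec 1)"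

definition modulus :: "(real ^ 'd \<Rightarrow> real) \<Rightarrow> real \<Rightarrow> real" where
  "modulus F r = Sup {\<bar>F (x + h) - F x\<bar> | x h. x \<in> unit_cube \<and> x + h \<in> unit_cube \<and> norm h \<le> r}"

text \<open>C^m on the closed cube: partial derivatives of all orders up to m exist
  (one-sided at the boundary, i.e. within the cube) and are continuous on the cube.\<close>
definition cont_diff_cube :: "nat \<Rightarrow> (real ^ 'd \<Rightarrow> real) \<Rightarrow> bool" where
  "cont_diff_cube m f \<longleftrightarrow>
    (\<exists>D :: ('d \<Rightarrow> nat) \<Rightarrow> real ^ 'd \<Rightarrow> real.
       D (\<lambda>_. 0) = f \<and>
       (\<forall>\<alpha>. sum \<alpha> UNIV \<le> m \<longrightarrow> continuous_on unit_cube (D \<alpha>)) \<and>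
       (\<forall>\<alpha> s x. sum \<alpha> UNIV < m \<longrightarrow> x \<in> unit_cube \<longrightarrow>
          ((\<lambda>t. D \<alpha> (x + t *\<^sub>R axis s 1)) has_real_derivative D (\<alpha>(s := Suc (\<alpha> s))) x)
            (at 0 within {t. x + t *\<^sub>R axis s 1 \<in> unit_cube})))"

text \<open>For n \<ge> 2 write n = 2^j + i with 1 \<le> i \<le> 2^j.\<close>
definition haar_lev :: "nat \<Rightarrow> nat" where
  "haar_lev n = (THE j. 2 ^ j < n \<and> n \<le> 2 ^ Suc j)"

definition haar_pos :: "nat \<Rightarrow> nat" where
  "haar_pos n = n - 2 ^ haar_lev n"

definition haar :: "nat \<Rightarrow> real \<Rightarrow> real" where
  "haar n t =
    (if n = 1 then 1 else
     let j = haar_lev n; i = haar_pos n;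
         h = 2 powr (real j / 2);
         a = (real i - 1) / 2 ^ j; m = (2 * real i - 1) / 2 ^ Suc j; b = real i / 2 ^ j
     in if a < t \<and> t < m then h
        else if m < t \<and> t < b then - h
        else if t = m then 0
        else if t = a then (if a = 0 then h else h / 2)
        else if t = b then (if b = 1 then - h else - h / 2)
        else 0)"

definition haar_d :: "('d \<Rightarrow> nat) \<Rightarrow> real ^ 'd \<Rightarrow> real" where
  "haar_d n x = (\<Prod>s\<in>UNIV. haar (n s) (x $ s))"

definition haar_coeff :: "('d \<Rightarrow> nat) \<Rightarrow> (real ^ 'd \<Rightarrow> real) \<Rightarrow> real" where
  "haar_coeff n g = integral unit_cube (\<lambda>x. g x * haar_d n x)"

text \<open>haar_partial k g x is the partial sum S_{2^k}(g,x).\<close>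
definition haar_partial :: "nat \<Rightarrow> (real ^ 'd \<Rightarrow> real) \<Rightarrow> real ^ 'd \<Rightarrow> real" where
  "haar_partial k g x = (\<Sum>n\<in>Pi\<^sub>E UNIV (\<lambda>_. {1..2 ^ k}). haar_coeff n g * haar_d n x)"

text \<open>Rectangular increment of F over the closed box [a,b] (= value of the measure
  on the box, computed from the distribution-type function F by inclusion-exclusion);
  zero if the box is empty.\<close>
definition rect_incr :: "(real ^ 'd \<Rightarrow> real) \<Rightarrow> real ^ 'd \<Rightarrow> real ^ 'd \<Rightarrow> real" where
  "rect_incr F a b =
    (if \<forall>s. a $ s \<le> b $ s then
       (\<Sum>E\<in>(UNIV :: 'd set set). (-1) ^ card (UNIV - E) * F (\<chi> s. if s \<in> E then b $ s else a $ s))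
     else 0)"

text \<open>Integral over the box [0,y] of a function g which is constant on the open dyadic
  cells of level k, computed pathwise as a linear combination of values of the
  version F of the stochastic measure (boundaries of cells carry no mass).\<close>
definition dyadic_int :: "(real ^ 'd \<Rightarrow> real) \<Rightarrow> nat \<Rightarrow> (real ^ 'd \<Rightarrow> real) \<Rightarrow> real ^ 'd \<Rightarrow> real" where
  "dyadic_int F k g y =
    (\<Sum>j\<in>Pi\<^sub>E UNIV (\<lambda>_. {..<2 ^ k}).
       g (\<chi> s. (real (j s) + 1 / 2) / 2 ^ k) *
       rect_incr F (\<chi> s. real (j s) / 2 ^ k) (\<chi> s. min ((real (j s) + 1) / 2 ^ k) (y $ s)))"

definition xi_term :: "(real ^ 'd \<Rightarrow> real) \<Rightarrow> (real ^ 'd \<Rightarrow> real) \<Rightarrow> nat \<Rightarrow> real ^ 'd \<Rightarrow> real" where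
  "xi_term F f k y =
     dyadic_int F (Suc k) (\<lambda>x. haar_partial (Suc k) f x - haar_partial k f x) y"

definition xi_tilde :: "(real ^ 'd \<Rightarrow> real) \<Rightarrow> (real ^ 'd \<Rightarrow> real) \<Rightarrow> real ^ 'd \<Rightarrow> real" where
  "xi_tilde F f y = dyadic_int F 0 (haar_partial 0 f) y + (\<Sum>k. xi_term F f k y)"

end

theory Submission
  imports Defs
begin

text \<open>
  The argument is pathwise: fix a continuous path \<open>F\<close> of the version. The Haar functions up
  to \<open>2^N\<close> span the functions that are constant on the dyadic cells of level \<open>N\<close>, so
  \<open>S_{2^N}(f)\<close> is the cell average of \<open>f\<close>, and the partial sums of the series telescope
  to the Stieltjes sums \<open>\<Sigma>\<^sub>N(y)\<close> of these averages against \<open>F\<close> over \<open>[0,y]\<close>.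
  Summation by parts moves the differences onto \<open>f\<close>. A mixed difference of a \<open>C\<^sup>d\<close>
  function over a box is at most a bound \<open>M\<close> of its mixed derivatives times the volume,
  hence \<open>|\<Sigma>\<^sub>N(y)| \<le> 4\<^sup>d M sup |F|\<close> uniformly in \<open>N\<close>. If the increments of
  \<open>F\<close> over boxes are at most a multiple of their volume, \<open>\<Sigma>\<^sub>N\<close> is uniformly
  Cauchy by the uniform continuity of \<open>f\<close>, and such \<open>F\<close> are uniformly dense by
  Stone-Weierstrass (sums of products of Lipschitz functions of one coordinate). So
  \<open>\<Sigma>\<^sub>N\<close> converges uniformly for every continuous \<open>F\<close>, and its limit, the version, is
  continuous.
\<close>

section \<open>Mixed differences and summation by parts on the lattice\<close>

lemma prod_of_bool: "finite A \<Longrightarrow> (\<Prod>s\<in>A. of_bool (P s) :: 'a::comm_semiring_1) = of_bool (\<forall>s\<in>A. P s)"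
  by (induction A rule: finite_induct) auto

lemma sum_mult_of_bool_eq_point:
  "finite A \<Longrightarrow> c \<in> A \<Longrightarrow> (\<Sum>k\<in>A. g k * of_bool (k = c)) = (g c :: 'a::semiring_1)"
  by (simp add: of_bool_def if_distrib[of "\<lambda>x. _ * x"] cong: if_cong)

lemma prod_diff_eq_sum_Pow:
  fixes x y :: "'a \<Rightarrow> 'b::comm_ring_1"
  assumes "finite A"
  shows "(\<Prod>s\<in>A. x s - y s) = (\<Sum>E\<in>Pow A. (-1) ^ card E * ((\<Prod>s\<in>A - E. x s) * (\<Prod>s\<in>E. y s)))"
  using prod_add[OF assms, of "\<lambda>s. - y s" x] by (simp add: prod_uminus mult_ac)

definition nodes :: "nat \<Rightarrow> ('d::finite \<Rightarrow> nat) set" where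
  "nodes n = Pi\<^sub>E UNIV (\<lambda>_. {..n})"

definition cells :: "nat \<Rightarrow> ('d::finite \<Rightarrow> nat) set" where
  "cells n = Pi\<^sub>E UNIV (\<lambda>_. {..<n})"

lemma finite_nodes [simp]: "finite (nodes n)"
  by (simp add: nodes_def finite_PiE)

lemma finite_cells [simp]: "finite (cells n)"
  by (simp add: cells_def finite_PiE)

lemma card_cells: "card (cells n :: ('d::finite \<Rightarrow> nat) set) = n ^ CARD('d)"
  by (simp add: cells_def card_PiE)

lemma nodes_iff: "i \<in> nodes n \<longleftrightarrow> (\<forall>s. i s \<le> n)"
  by (auto simp: nodes_def PiE_iff)

lemma cells_iff: "i \<in> cells n \<longleftrightarrow> (\<forall>s. i s < n)"
  by (auto simp: cells_def PiE_iff)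

definition lattice_incr :: "(('d::finite \<Rightarrow> nat) \<Rightarrow> real) \<Rightarrow> ('d \<Rightarrow> nat) \<Rightarrow> ('d \<Rightarrow> nat) \<Rightarrow> real" where
  "lattice_incr G a b = (\<Sum>E\<in>UNIV. (-1) ^ card E * G (\<lambda>s. if s \<in> E then a s else b s))"

text \<open>Backward mixed difference, with \<open>g\<close> taken to vanish at negative indices.\<close>

definition backward_diff :: "(('d::finite \<Rightarrow> nat) \<Rightarrow> real) \<Rightarrow> ('d \<Rightarrow> nat) \<Rightarrow> real" where
  "backward_diff g i = (\<Sum>E\<in>Pow {s. i s \<noteq> 0}. (-1) ^ card E * g (\<lambda>s. if s \<in> E then i s - 1 else i s))"

lemma lattice_incr_eq_sum_nodes:
  assumes "\<And>s. a s \<le> n" "\<And>s. b s \<le> n"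
  shows "lattice_incr G a b = (\<Sum>k\<in>nodes n. G k * (\<Prod>s\<in>UNIV. of_bool (k s = b s) - of_bool (k s = a s)))"
proof -
  define mix where "mix E = (\<lambda>s. if s \<in> E then a s else b s)" for E
  have kernel: "(\<Prod>s\<in>UNIV. of_bool (k s = b s) - of_bool (k s = a s)) =
      (\<Sum>E\<in>UNIV. (-1) ^ card E * of_bool (k = mix E) :: real)" for k
  proof -
    have "(\<Prod>s\<in>UNIV - E. of_bool (k s = b s)) * (\<Prod>s\<in>E. of_bool (k s = a s)) = (of_bool (k = mix E) :: real)" for E
      by (simp add: prod_of_bool mix_def fun_eq_iff) (metis Diff_iff UNIV_I)
    then show ?thesis
      by (simp add: prod_diff_eq_sum_Pow)
  qed
  have "mix E \<in> nodes n" for E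
    using assms by (simp add: nodes_iff mix_def)
  then have "(\<Sum>k\<in>nodes n. G k * ((-1) ^ card E * of_bool (k = mix E))) = (-1) ^ card E * G (mix E)" for E
    using sum_mult_of_bool_eq_point[of "nodes n" "mix E" "\<lambda>k. (-1) ^ card E * G k"] by (simp add: mult_ac)
  then have "(\<Sum>k\<in>nodes n. G k * (\<Prod>s\<in>UNIV. of_bool (k s = b s) - of_bool (k s = a s)))
      = (\<Sum>E\<in>UNIV. (-1) ^ card E * G (mix E))"
    unfolding kernel sum_distrib_left by (subst sum.swap) simp
  then show ?thesis
    by (simp add: lattice_incr_def mix_def)
qed

lemma backward_diff_eq_sum_cells:
  assumes "i \<in> cells n"
  shows "backward_diff g i = (\<Sum>m\<in>cells n. g m * (\<Prod>s\<in>UNIV. of_bool (i s = m s) - of_bool (i s = Suc (m s))))"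
proof -
  define S where "S = {s. i s \<noteq> 0}"
  define w where "w E = (\<lambda>s. if s \<in> E then i s - 1 else i s)" for E
  have kernel: "(\<Prod>s\<in>UNIV. of_bool (i s = m s) - of_bool (i s = Suc (m s))) =
      (\<Sum>E\<in>Pow S. (-1) ^ card E * of_bool (m = w E) :: real)" for m
  proof -
    have "(\<forall>s\<in>UNIV - E. i s = m s) \<and> (\<forall>s\<in>E. i s = Suc (m s)) \<longleftrightarrow> E \<subseteq> S \<and> m = w E" for E
      unfolding S_def w_def fun_eq_iff by (auto split: if_splits)
    then have "(\<Prod>s\<in>UNIV - E. of_bool (i s = m s)) * (\<Prod>s\<in>E. of_bool (i s = Suc (m s)))
        = (of_bool (E \<subseteq> S \<and> m = w E) :: real)" for E
      by (simp add: prod_of_bool flip: of_bool_conj)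
    then have "(\<Prod>s\<in>UNIV. of_bool (i s = m s) - of_bool (i s = Suc (m s))) =
        (\<Sum>E\<in>Pow UNIV. (-1) ^ card E * of_bool (m = w E) * of_bool (E \<subseteq> S) :: real)"
      by (simp add: prod_diff_eq_sum_Pow of_bool_conj mult_ac)
    also have "\<dots> = (\<Sum>E\<in>Pow S. (-1) ^ card E * of_bool (m = w E))"
    proof -
      have "Pow UNIV \<inter> {E. E \<subseteq> S} = Pow S"
        by auto
      then show ?thesis
        by (simp only: sum_mult_of_bool_eq[OF finite_Pow_iff[THEN iffD2, OF finite]])
    qed
    finally show ?thesis .
  qed
  have "w E \<in> cells n" for E
    using assms by (auto simp: cells_iff w_def less_imp_diff_less)
  then have "(\<Sum>m\<in>cells n. g m * ((-1) ^ card E * of_bool (m = w E))) = (-1) ^ card E * g (w E)" for E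
    using sum_mult_of_bool_eq_point[of "cells n" "w E" "\<lambda>m. (-1) ^ card E * g m"] by (simp add: mult_ac)
  then have "(\<Sum>m\<in>cells n. g m * (\<Sum>E\<in>Pow S. (-1) ^ card E * of_bool (m = w E))) =
      (\<Sum>E\<in>Pow S. (-1) ^ card E * g (w E))"
    unfolding sum_distrib_left by (subst sum.swap) simp
  then show ?thesis
    by (simp add: kernel backward_diff_def S_def w_def)
qed

lemma abel_kernel_1d:
  fixes m n k :: nat
  assumes "m < n" "k \<le> n"
  shows "(\<Sum>t<n. (of_bool (t = m) - of_bool (t = Suc m)) * (of_bool (k = n) - of_bool (k = t))) =
         (of_bool (k = Suc m) - of_bool (k = m) :: real)"
  using assms by (simp add: left_diff_distrib sum_subtractf)

lemma abel_kernel: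
  assumes "m \<in> cells n" "k \<in> nodes n"
  shows "(\<Sum>i\<in>cells n. (\<Prod>s\<in>UNIV. of_bool (i s = m s) - of_bool (i s = Suc (m s))) *
                       (\<Prod>s\<in>UNIV. of_bool (k s = n) - of_bool (k s = i s))) =
         (\<Prod>s\<in>UNIV. of_bool (k s = Suc (m s)) - of_bool (k s = m s) :: real)"
proof -
  have "(\<Sum>i\<in>cells n. (\<Prod>s\<in>UNIV. of_bool (i s = m s) - of_bool (i s = Suc (m s))) *
                       (\<Prod>s\<in>UNIV. of_bool (k s = n) - of_bool (k s = i s))) =
      (\<Prod>s\<in>UNIV. \<Sum>t<n. (of_bool (t = m s) - of_bool (t = Suc (m s))) * (of_bool (k s = n) - of_bool (k s = t)) :: real)"
    unfolding cells_def prod.distrib[symmetric]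
    by (rule prod_sum_PiE[symmetric]) auto
  also have "\<dots> = (\<Prod>s\<in>UNIV. of_bool (k s = Suc (m s)) - of_bool (k s = m s))"
    using assms by (intro prod.cong refl abel_kernel_1d) (auto simp: cells_iff nodes_iff)
  finally show ?thesis .
qed

theorem summation_by_parts:
  "(\<Sum>j\<in>cells n. g j * lattice_incr G j (\<lambda>s. Suc (j s))) =
   (\<Sum>i\<in>cells n. backward_diff g i * lattice_incr G i (\<lambda>_. n))"
proof -
  define A where "A m i = (\<Prod>s\<in>UNIV. of_bool (i s = m s) - of_bool (i s = Suc (m s)) :: real)" for m i :: "'a \<Rightarrow> nat"
  define B where "B k i = (\<Prod>s\<in>UNIV. of_bool (k s = n) - of_bool (k s = i s) :: real)" for k i :: "'a \<Rightarrow> nat"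
  define L where "L m k = (\<Prod>s\<in>UNIV. of_bool (k s = Suc (m s)) - of_bool (k s = m s) :: real)" for m k :: "'a \<Rightarrow> nat"
  have incr_L: "lattice_incr G m (\<lambda>s. Suc (m s)) = (\<Sum>k\<in>nodes n. G k * L m k)" if "m \<in> cells n" for m
    unfolding L_def using that by (intro lattice_incr_eq_sum_nodes) (auto simp: cells_iff Suc_leI less_imp_le)
  have incr_B: "lattice_incr G i (\<lambda>_. n) = (\<Sum>k\<in>nodes n. G k * B k i)" if "i \<in> cells n" for i
    unfolding B_def using that by (intro lattice_incr_eq_sum_nodes) (auto simp: cells_iff less_imp_le)
  have diff_A: "backward_diff g i = (\<Sum>m\<in>cells n. g m * A m i)" if "i \<in> cells n" for i
    unfolding A_def using that by (rule backward_diff_eq_sum_cells)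
  have "(\<Sum>i\<in>cells n. backward_diff g i * lattice_incr G i (\<lambda>_. n)) =
      (\<Sum>i\<in>cells n. \<Sum>m\<in>cells n. \<Sum>k\<in>nodes n. g m * G k * (A m i * B k i))"
    by (intro sum.cong refl) (simp only: diff_A incr_B sum_product, simp add: mult_ac)
  also have "\<dots> = (\<Sum>m\<in>cells n. \<Sum>k\<in>nodes n. g m * G k * (\<Sum>i\<in>cells n. A m i * B k i))"
    by (subst sum.swap, rule sum.cong[OF refl], subst sum.swap) (simp add: sum_distrib_left)
  also have "\<dots> = (\<Sum>m\<in>cells n. \<Sum>k\<in>nodes n. g m * G k * L m k)"
    unfolding A_def B_def L_def by (intro sum.cong refl) (simp add: abel_kernel)
  also have "\<dots> = (\<Sum>j\<in>cells n. g j * lattice_incr G j (\<lambda>s. Suc (j s)))"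
    by (intro sum.cong refl) (simp add: incr_L sum_distrib_left mult.assoc)
  finally show ?thesis ..
qed

lemma telescope_block_1d:
  fixes m n k r :: nat
  assumes "m < n" "0 < r"
  shows "(\<Sum>t<r * n. of_bool (t div r = m) * (of_bool (k = Suc t) - of_bool (k = t))) =
         (of_bool (k = r * m + r) - of_bool (k = r * m) :: real)"
proof -
  have div_iff: "t div r = m \<longleftrightarrow> t \<in> {r * m..<r * m + r}" for t
  proof
    assume "t div r = m"
    then show "t \<in> {r * m..<r * m + r}"
      using times_div_less_eq_dividend[of r t] dividend_less_times_div[of r t] assms(2) by simp
  qed (simp add: div_nat_eqI)
  have "r * m + r \<le> r * n"
    using assms by (metis Suc_leI add.commute mult_Suc_right mult_le_mono2)
  then have "{..<r * n} \<inter> {t. t div r = m} = {r * m..<r * m + r}"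
    unfolding div_iff by auto
  then have "(\<Sum>t<r * n. of_bool (t div r = m) * (of_bool (k = Suc t) - of_bool (k = t))) =
      (\<Sum>t=r * m..<r * m + r. of_bool (k = Suc t) - of_bool (k = t) :: real)"
    by (simp only: sum_of_bool_mult_eq[OF finite_lessThan])
  also have "\<dots> = of_bool (k = r * m + r) - of_bool (k = r * m)"
    by (rule sum_Suc_diff') simp
  finally show ?thesis .
qed

lemma lattice_incr_block:
  assumes "m \<in> cells n" "0 < r"
  shows "(\<Sum>j\<in>cells (r * n). of_bool (m = (\<lambda>s. j s div r)) * lattice_incr G j (\<lambda>s. Suc (j s))) =
         lattice_incr G (\<lambda>s. r * m s) (\<lambda>s. r * m s + r)"
proof -
  define K where "K j k = (\<Prod>s\<in>UNIV. of_bool (k s = Suc (j s)) - of_bool (k s = j s) :: real)" for j k :: "'a \<Rightarrow> nat"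
  define Kb where "Kb k = (\<Prod>s\<in>UNIV. of_bool (k s = r * m s + r) - of_bool (k s = r * m s) :: real)" for k :: "'a \<Rightarrow> nat"
  have block_le: "r * m s + r \<le> r * n" for s
    using assms by (metis Suc_leI add.commute cells_iff mult_Suc_right mult_le_mono2)
  have block_kernel: "(\<Sum>j\<in>cells (r * n). of_bool (m = (\<lambda>s. j s div r)) * K j k) = Kb k" for k
  proof -
    have split_div: "of_bool (m = (\<lambda>s. j s div r)) = (\<Prod>s\<in>UNIV. of_bool (j s div r = m s) :: real)" for j
      by (subst prod_of_bool) (simp_all add: fun_eq_iff, metis)
    have "(\<Sum>j\<in>cells (r * n). of_bool (m = (\<lambda>s. j s div r)) * K j k) =
        (\<Prod>s\<in>UNIV. \<Sum>t<r * n. of_bool (t div r = m s) * (of_bool (k s = Suc t) - of_bool (k s = t)) :: real)"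
      unfolding cells_def split_div K_def prod.distrib[symmetric] by (rule prod_sum_PiE[symmetric]) auto
    also have "\<dots> = Kb k"
      unfolding Kb_def using assms by (intro prod.cong refl telescope_block_1d) (auto simp: cells_iff)
    finally show ?thesis .
  qed
  have incr_j: "lattice_incr G j (\<lambda>s. Suc (j s)) = (\<Sum>k\<in>nodes (r * n). G k * K j k)" if "j \<in> cells (r * n)" for j
    unfolding K_def using that by (intro lattice_incr_eq_sum_nodes) (auto simp: cells_iff Suc_leI less_imp_le)
  have incr_block: "lattice_incr G (\<lambda>s. r * m s) (\<lambda>s. r * m s + r) = (\<Sum>k\<in>nodes (r * n). G k * Kb k)"
    unfolding Kb_def using block_le by (intro lattice_incr_eq_sum_nodes) (meson add_leD1)+
  have "(\<Sum>j\<in>cells (r * n). of_bool (m = (\<lambda>s. j s div r)) * lattice_incr G j (\<lambda>s. Suc (j s))) =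
      (\<Sum>j\<in>cells (r * n). \<Sum>k\<in>nodes (r * n). of_bool (m = (\<lambda>s. j s div r)) * (G k * K j k))"
    by (intro sum.cong refl) (simp only: incr_j sum_distrib_left)
  also have "\<dots> = (\<Sum>k\<in>nodes (r * n). \<Sum>j\<in>cells (r * n). G k * (of_bool (m = (\<lambda>s. j s div r)) * K j k))"
    by (subst sum.swap) (intro sum.cong refl mult.left_commute)
  also have "\<dots> = lattice_incr G (\<lambda>s. r * m s) (\<lambda>s. r * m s + r)"
    by (simp only: sum_distrib_left[symmetric] block_kernel incr_block)
  finally show ?thesis .
qed

theorem sum_lattice_incr_refine:
  assumes "0 < r"
  shows "(\<Sum>j\<in>cells (r * n). g (\<lambda>s. j s div r) * lattice_incr G j (\<lambda>s. Suc (j s))) =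
         (\<Sum>m\<in>cells n. g m * lattice_incr G (\<lambda>s. r * m s) (\<lambda>s. r * m s + r))"
proof -
  have coarse_cell: "(\<lambda>s. j s div r) \<in> cells n" if "j \<in> cells (r * n)" for j
    using that assms by (auto simp: cells_iff less_mult_imp_div_less mult.commute)
  have coarse: "g (\<lambda>s. j s div r) = (\<Sum>m\<in>cells n. g m * of_bool (m = (\<lambda>s. j s div r)))"
    if "j \<in> cells (r * n)" for j
    by (rule sum_mult_of_bool_eq_point[where g = g, symmetric, OF finite_cells coarse_cell[OF that]])
  have "(\<Sum>j\<in>cells (r * n). g (\<lambda>s. j s div r) * lattice_incr G j (\<lambda>s. Suc (j s))) =
      (\<Sum>j\<in>cells (r * n). \<Sum>m\<in>cells n. g m * (of_bool (m = (\<lambda>s. j s div r)) * lattice_incr G j (\<lambda>s. Suc (j s))))"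
    by (intro sum.cong refl) (simp only: coarse sum_distrib_right mult.assoc)
  also have "\<dots> = (\<Sum>m\<in>cells n. g m * (\<Sum>j\<in>cells (r * n). of_bool (m = (\<lambda>s. j s div r)) * lattice_incr G j (\<lambda>s. Suc (j s))))"
    by (subst sum.swap) (simp only: sum_distrib_left)
  also have "\<dots> = (\<Sum>m\<in>cells n. g m * lattice_incr G (\<lambda>s. r * m s) (\<lambda>s. r * m s + r))"
    using assms by (intro sum.cong refl) (simp only: lattice_incr_block)
  finally show ?thesis .
qed

section \<open>Rectangular increments, dyadic cells and Stieltjes sums\<close>

lemma mem_unit_cube: "x \<in> unit_cube \<longleftrightarrow> (\<forall>s. 0 \<le> x $ s \<and> x $ s \<le> 1)"
  by (simp add: unit_cube_def mem_box_cart)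

lemma zero_mem_unit_cube [simp]: "0 \<in> unit_cube"
  by (simp add: mem_unit_cube)

lemma compact_unit_cube [simp]: "compact unit_cube"
  by (simp add: unit_cube_def)

definition box_incr_on :: "'d::finite set \<Rightarrow> (real ^ 'd \<Rightarrow> real) \<Rightarrow> real ^ 'd \<Rightarrow> real ^ 'd \<Rightarrow> real" where
  "box_incr_on T F a b = (\<Sum>E\<in>Pow T. (-1) ^ card E * F (\<chi> s. if s \<in> E then a $ s else b $ s))"

abbreviation box_incr :: "(real ^ 'd::finite \<Rightarrow> real) \<Rightarrow> real ^ 'd \<Rightarrow> real ^ 'd \<Rightarrow> real" where
  "box_incr \<equiv> box_incr_on UNIV"

lemma box_incr_on_insert:
  assumes "finite T" "s \<notin> T"
  shows "box_incr_on (insert s T) F a b =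
         box_incr_on T F a b - box_incr_on T F a (b + (a $ s - b $ s) *\<^sub>R axis s 1)"
proof -
  have corner: "(\<chi> i. if i \<in> insert s E then a $ i else b $ i) =
      (\<chi> i. if i \<in> E then a $ i else (b + (a $ s - b $ s) *\<^sub>R axis s 1) $ i)" if "E \<subseteq> T" for E
    using that assms by (auto simp: vec_eq_iff axis_def)
  have "box_incr_on (insert s T) F a b =
      box_incr_on T F a b + (\<Sum>E\<in>insert s ` Pow T. (-1) ^ card E * F (\<chi> i. if i \<in> E then a $ i else b $ i))"
    unfolding box_incr_on_def Pow_insert using assms by (intro sum.union_disjoint) auto
  also have "(\<Sum>E\<in>insert s ` Pow T. (-1) ^ card E * F (\<chi> i. if i \<in> E then a $ i else b $ i)) =
      (\<Sum>E\<in>Pow T. (-1) ^ card (insert s E) * F (\<chi> i. if i \<in> insert s E then a $ i else b $ i))"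
    using assms by (intro sum.reindex[unfolded comp_def]) (auto intro!: inj_onI)
  also have "\<dots> = - box_incr_on T F a (b + (a $ s - b $ s) *\<^sub>R axis s 1)"
    unfolding box_incr_on_def sum_negf[symmetric]
  proof (intro sum.cong refl)
    fix E assume "E \<in> Pow T"
    then have "finite E" "s \<notin> E"
      using assms by (auto intro: finite_subset)
    then have "card (insert s E) = Suc (card E)"
      by simp
    with corner \<open>E \<in> Pow T\<close> show "(-1) ^ card (insert s E) * F (\<chi> i. if i \<in> insert s E then a $ i else b $ i) =
        - ((-1) ^ card E * F (\<chi> i. if i \<in> E then a $ i else (b + (a $ s - b $ s) *\<^sub>R axis s 1) $ i))"
      by simp
  qed
  finally show ?thesis
    by simp
qed

lemma box_incr_degenerate:
  assumes "a $ s = b $ s"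
  shows "box_incr F a b = 0"
proof -
  have "UNIV = insert s (UNIV - {s})"
    by auto
  then show ?thesis
    using box_incr_on_insert[of "UNIV - {s}" s F a b] assms by simp
qed

lemma box_incr_on_diff: "box_incr_on T (\<lambda>x. F x - G x) a b = box_incr_on T F a b - box_incr_on T G a b"
  unfolding box_incr_on_def by (simp add: right_diff_distrib sum_subtractf)

lemma box_incr_on_add: "box_incr_on T (\<lambda>x. F x + G x) a b = box_incr_on T F a b + box_incr_on T G a b"
  unfolding box_incr_on_def by (simp add: distrib_left sum.distrib)

lemma box_incr_prod: "box_incr (\<lambda>x. \<Prod>s\<in>UNIV. \<phi> s (x $ s)) a b = (\<Prod>s\<in>UNIV. \<phi> s (b $ s) - \<phi> s (a $ s))"
proof -
  have corner: "(\<Prod>s\<in>UNIV. \<phi> s ((\<chi> s. if s \<in> E then a $ s else b $ s) $ s)) =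
      (\<Prod>s\<in>UNIV - E. \<phi> s (b $ s)) * (\<Prod>s\<in>E. \<phi> s (a $ s))" for E
  proof -
    have "(\<Prod>s\<in>UNIV. \<phi> s ((\<chi> s. if s \<in> E then a $ s else b $ s) $ s)) =
        (\<Prod>s\<in>UNIV. if s \<in> E then \<phi> s (a $ s) else \<phi> s (b $ s))"
      by (intro prod.cong) auto
    then show ?thesis
      by (simp add: prod.If_cases Compl_eq_Diff_UNIV mult.commute)
  qed
  show ?thesis
    unfolding box_incr_on_def by (simp only: corner prod_diff_eq_sum_Pow[OF finite])
qed

lemma box_incr_bound:
  fixes a b :: "real ^ 'd::finite"
  assumes "\<And>x. x \<in> unit_cube \<Longrightarrow> \<bar>F x\<bar> \<le> B" "a \<in> unit_cube" "b \<in> unit_cube"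
  shows "\<bar>box_incr F a b\<bar> \<le> 2 ^ CARD('d) * B"
proof -
  have "\<bar>box_incr F a b\<bar> \<le> (\<Sum>E\<in>Pow (UNIV :: 'd set). \<bar>F (\<chi> s. if s \<in> E then a $ s else b $ s)\<bar>)"
    unfolding box_incr_on_def by (rule order_trans[OF sum_abs]) (simp add: abs_mult)
  also have "\<dots> \<le> (\<Sum>E\<in>Pow (UNIV :: 'd set). B)"
    using assms by (intro sum_mono assms(1)) (auto simp: mem_unit_cube)
  also have "\<dots> = 2 ^ CARD('d) * B"
    by (simp add: card_Pow card_UNIV)
  finally show ?thesis .
qed

lemma rect_incr_eq_box_incr:
  assumes "\<forall>s. a $ s \<le> b $ s"
  shows "rect_incr F a b = box_incr F a b"
  unfolding rect_incr_def box_incr_on_def using assms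
  by (simp, intro sum.reindex_bij_witness[where i = "\<lambda>E. UNIV - E" and j = "\<lambda>E. UNIV - E"])
    (auto simp: Compl_eq_Diff_UNIV[symmetric] vec_eq_iff intro!: arg_cong[where f = F])

definition grid_pt :: "nat \<Rightarrow> real ^ 'd \<Rightarrow> ('d \<Rightarrow> nat) \<Rightarrow> real ^ 'd" where
  "grid_pt k y i = (\<chi> s. min (real (i s) / 2 ^ k) (y $ s))"

lemma grid_pt_in_unit_cube: "y \<in> unit_cube \<Longrightarrow> grid_pt k y i \<in> unit_cube"
  by (auto simp: mem_unit_cube grid_pt_def min_le_iff_disj)

lemma grid_pt_top: "y \<in> unit_cube \<Longrightarrow> grid_pt k y (\<lambda>_. 2 ^ k) = y"
  by (auto simp: grid_pt_def vec_eq_iff mem_unit_cube)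

lemma grid_pt_scale: "grid_pt (k + l) y (\<lambda>s. 2 ^ l * i s) = grid_pt k y i"
  by (simp add: grid_pt_def vec_eq_iff power_add)

lemma grid_pt_step:
  "grid_pt k y j $ s \<le> grid_pt k y (\<lambda>s. Suc (j s)) $ s \<and>
   grid_pt k y (\<lambda>s. Suc (j s)) $ s - grid_pt k y j $ s \<le> 1 / 2 ^ k"
proof -
  have "real (j s) / 2 ^ k \<le> real (Suc (j s)) / 2 ^ k"
    by (simp add: divide_right_mono)
  moreover have "real (Suc (j s)) / 2 ^ k - real (j s) / 2 ^ k = 1 / 2 ^ k"
    by (simp add: diff_divide_distrib[symmetric])
  ultimately show ?thesis
    by (auto simp: grid_pt_def min_def)
qed

lemma lattice_incr_grid_pt:
  "lattice_incr (\<lambda>i. F (grid_pt k y i)) a b = box_incr F (grid_pt k y a) (grid_pt k y b)"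
  unfolding lattice_incr_def box_incr_on_def Pow_UNIV
  by (intro sum.cong refl arg_cong[where f = "\<lambda>x. _ * F x"]) (auto simp: grid_pt_def vec_eq_iff)

lemma rect_incr_grid_pt:
  "rect_incr F (\<chi> s. real (j s) / 2 ^ k) (\<chi> s. min ((real (j s) + 1) / 2 ^ k) (y $ s)) =
   box_incr F (grid_pt k y j) (grid_pt k y (\<lambda>s. Suc (j s)))"
proof (cases "\<forall>s. real (j s) / 2 ^ k \<le> min ((real (j s) + 1) / 2 ^ k) (y $ s)")
  case True
  then have "grid_pt k y j = (\<chi> s. real (j s) / 2 ^ k)"
    and "grid_pt k y (\<lambda>s. Suc (j s)) = (\<chi> s. min ((real (j s) + 1) / 2 ^ k) (y $ s))"
    by (auto simp: grid_pt_def vec_eq_iff add.commute)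
  with True show ?thesis
    by (simp add: rect_incr_eq_box_incr)
next
  case False
  then obtain s where "\<not> real (j s) / 2 ^ k \<le> min ((real (j s) + 1) / 2 ^ k) (y $ s)"
    by blast
  moreover have "real (j s) / 2 ^ k \<le> (real (j s) + 1) / 2 ^ k"
    by (simp add: divide_right_mono)
  ultimately have "y $ s < real (j s) / 2 ^ k"
    by auto
  then have "grid_pt k y j $ s = grid_pt k y (\<lambda>s. Suc (j s)) $ s"
    using grid_pt_step[of k y j s] by (simp add: grid_pt_def)
  moreover have "\<not> (\<forall>s. (\<chi> s. real (j s) / 2 ^ k) $ s \<le> (\<chi> s. min ((real (j s) + 1) / 2 ^ k) (y $ s)) $ s)"
    using False by simp
  ultimately show ?thesis
    by (simp only: rect_incr_def if_not_P if_False box_incr_degenerate)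
qed

definition cell_lo :: "nat \<Rightarrow> ('d \<Rightarrow> nat) \<Rightarrow> real ^ 'd" where
  "cell_lo N m = (\<chi> s. real (m s) / 2 ^ N)"

definition cell_hi :: "nat \<Rightarrow> ('d \<Rightarrow> nat) \<Rightarrow> real ^ 'd" where
  "cell_hi N m = (\<chi> s. (real (m s) + 1) / 2 ^ N)"

definition dyadic_cell :: "nat \<Rightarrow> ('d \<Rightarrow> nat) \<Rightarrow> (real ^ 'd) set" where
  "dyadic_cell N m = cbox (cell_lo N m) (cell_hi N m)"

lemma mem_dyadic_cell:
  "x \<in> dyadic_cell N m \<longleftrightarrow> (\<forall>s. real (m s) / 2 ^ N \<le> x $ s \<and> x $ s \<le> (real (m s) + 1) / 2 ^ N)"
  by (simp add: dyadic_cell_def mem_box_cart cell_lo_def cell_hi_def)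

lemma cell_lo_in_dyadic_cell: "cell_lo N m \<in> dyadic_cell N m"
  by (simp add: mem_dyadic_cell cell_lo_def divide_right_mono)

lemma dyadic_cell_subset_unit_cube:
  assumes "m \<in> cells (2 ^ N)"
  shows "dyadic_cell N m \<subseteq> unit_cube"
proof
  fix x assume x: "x \<in> dyadic_cell N m"
  have "0 \<le> x $ s \<and> x $ s \<le> 1" for s
  proof -
    have "m s + 1 \<le> 2 ^ N"
      using assms by (simp add: cells_iff Suc_le_eq)
    then have "real (m s) + 1 \<le> 2 ^ N"
      using of_nat_le_iff[of "m s + 1" "2 ^ N", where 'a = real] by simp
    then have "(real (m s) + 1) / 2 ^ N \<le> 1"
      by simp
    moreover have "0 \<le> real (m s) / 2 ^ N"
      by simp
    ultimately show ?thesis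
      using x by (meson mem_dyadic_cell order_trans)
  qed
  then show "x \<in> unit_cube"
    by (simp add: mem_unit_cube)
qed

lemma content_dyadic_cell:
  "Henstock_Kurzweil_Integration.content (dyadic_cell N m :: (real ^ 'd::finite) set) = (1 / 2 ^ N) ^ CARD('d)"
proof -
  have "dyadic_cell N m \<noteq> ({} :: (real ^ 'd) set)"
    using cell_lo_in_dyadic_cell by blast
  then have "Henstock_Kurzweil_Integration.content (dyadic_cell N m :: (real ^ 'd) set) =
      (\<Prod>s\<in>UNIV. cell_hi N m $ s - cell_lo N m $ s)"
    unfolding dyadic_cell_def by (rule content_cbox_cart)
  also have "\<dots> = (\<Prod>s\<in>(UNIV :: 'd set). 1 / 2 ^ N)"
    by (simp add: cell_lo_def cell_hi_def diff_divide_distrib[symmetric])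
  finally show ?thesis
    by simp
qed

definition cell_avg :: "nat \<Rightarrow> (real ^ 'd::finite \<Rightarrow> real) \<Rightarrow> ('d \<Rightarrow> nat) \<Rightarrow> real" where
  "cell_avg N f m = 2 ^ (N * CARD('d)) * integral (dyadic_cell N m) f"

definition stieltjes_sum :: "(real ^ 'd::finite \<Rightarrow> real) \<Rightarrow> (real ^ 'd \<Rightarrow> real) \<Rightarrow> nat \<Rightarrow> real ^ 'd \<Rightarrow> real" where
  "stieltjes_sum F f N y =
     (\<Sum>j\<in>cells (2 ^ N). cell_avg N f j * box_incr F (grid_pt N y j) (grid_pt N y (\<lambda>s. Suc (j s))))"

lemma stieltjes_sum_by_parts:
  assumes "y \<in> unit_cube"
  shows "stieltjes_sum F f N y = (\<Sum>i\<in>cells (2 ^ N). backward_diff (cell_avg N f) i * box_incr F (grid_pt N y i) y)"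
  using summation_by_parts[where n = "2 ^ N" and g = "cell_avg N f" and G = "\<lambda>i. F (grid_pt N y i)"]
  by (simp add: stieltjes_sum_def lattice_incr_grid_pt grid_pt_top[OF assms])

lemma stieltjes_sum_refine:
  "stieltjes_sum F f N y =
   (\<Sum>j\<in>cells (2 ^ (N + l)). cell_avg N f (\<lambda>s. j s div 2 ^ l) *
      box_incr F (grid_pt (N + l) y j) (grid_pt (N + l) y (\<lambda>s. Suc (j s))))"
proof -
  have "grid_pt (N + l) y (\<lambda>s. 2 ^ l * m s + 2 ^ l) = grid_pt N y (\<lambda>s. Suc (m s))" for m
    using grid_pt_scale[of N l y "\<lambda>s. Suc (m s)"] by (simp add: add.commute)
  moreover have "(2::nat) ^ l * 2 ^ N = 2 ^ (N + l)"
    by (simp add: power_add)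
  ultimately show ?thesis
    using sum_lattice_incr_refine[where r = "2 ^ l" and g = "cell_avg N f" and n = "2 ^ N"
        and G = "\<lambda>i. F (grid_pt (N + l) y i)"]
    by (simp only: stieltjes_sum_def lattice_incr_grid_pt grid_pt_scale zero_less_power pos2)
qed

lemma stieltjes_sum_diff: "stieltjes_sum (\<lambda>x. F x - G x) f N y = stieltjes_sum F f N y - stieltjes_sum G f N y"
  by (simp add: stieltjes_sum_def box_incr_on_diff right_diff_distrib sum_subtractf)

lemma continuous_on_stieltjes_sum:
  assumes "continuous_on unit_cube F"
  shows "continuous_on unit_cube (stieltjes_sum F f N)"
proof -
  have "continuous_on unit_cube (\<lambda>y. F (grid_pt N y i))" for i
  proof (rule continuous_on_compose2[OF assms])
    show "continuous_on unit_cube (\<lambda>y. grid_pt N y i)"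
      unfolding grid_pt_def by (intro continuous_on_vec_lambda continuous_intros)
  qed (auto simp: grid_pt_in_unit_cube)
  then show ?thesis
    unfolding stieltjes_sum_def lattice_incr_grid_pt[symmetric] lattice_incr_def
    by (intro continuous_intros)
qed

lemma integrable_on_dyadic_cell:
  fixes f :: "real ^ 'd::finite \<Rightarrow> real"
  assumes "continuous_on unit_cube f" "m \<in> cells (2 ^ N)"
  shows "f integrable_on dyadic_cell N m"
proof -
  have "continuous_on (dyadic_cell N m) f"
    using assms by (metis continuous_on_subset dyadic_cell_subset_unit_cube)
  then show ?thesis
    unfolding dyadic_cell_def by (rule integrable_continuous)
qed

lemma scaled_integral_dyadic_cell_bound:
  fixes g :: "real ^ 'd::finite \<Rightarrow> real"
  assumes "g integrable_on dyadic_cell N m" "\<And>x. x \<in> dyadic_cell N m \<Longrightarrow> \<bar>g x\<bar> \<le> B"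
  shows "2 ^ (N * CARD('d)) * \<bar>integral (dyadic_cell N m) g\<bar> \<le> B"
proof -
  have "0 \<le> B"
    using assms(2)[OF cell_lo_in_dyadic_cell] by linarith
  then have "\<bar>integral (dyadic_cell N m) g\<bar> \<le> B * (1 / 2 ^ N) ^ CARD('d)"
    using has_integral_bound[OF _ integrable_integral[OF assms(1)[unfolded dyadic_cell_def]]] assms(2)
    by (simp add: dyadic_cell_def content_dyadic_cell[unfolded dyadic_cell_def])
  then show ?thesis
    by (simp add: power_mult field_simps power_divide)
qed

lemma cell_avg_close:
  fixes f :: "real ^ 'd::finite \<Rightarrow> real"
  assumes "continuous_on unit_cube f" "m \<in> cells (2 ^ N)"
    and "\<And>x. x \<in> dyadic_cell N m \<Longrightarrow> \<bar>f x - c\<bar> \<le> \<eta>"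
  shows "\<bar>cell_avg N f m - c\<bar> \<le> \<eta>"
proof -
  have "integral (dyadic_cell N m) (\<lambda>x. f x - c) = integral (dyadic_cell N m) f - (1 / 2 ^ N) ^ CARD('d) * c"
    using integral_diff[OF integrable_on_dyadic_cell[OF assms(1,2), unfolded dyadic_cell_def] integrable_const[of c]]
    by (simp add: dyadic_cell_def content_dyadic_cell[unfolded dyadic_cell_def])
  then have "cell_avg N f m - c = 2 ^ (N * CARD('d)) * integral (dyadic_cell N m) (\<lambda>x. f x - c)"
    by (simp add: cell_avg_def right_diff_distrib power_mult power_divide)
  moreover have "2 ^ (N * CARD('d)) * \<bar>integral (dyadic_cell N m) (\<lambda>x. f x - c)\<bar> \<le> \<eta>"
    using integrable_on_dyadic_cell[OF assms(1,2)] assms(3)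
    by (intro scaled_integral_dyadic_cell_bound) (auto simp: dyadic_cell_def intro: integrable_diff)
  ultimately show ?thesis
    by (simp add: abs_mult)
qed

definition dyadic_shift :: "nat \<Rightarrow> 'd set \<Rightarrow> real ^ 'd" where
  "dyadic_shift N E = (\<chi> s. if s \<in> E then 1 / 2 ^ N else 0)"

lemma has_integral_shifted_dyadic_cell:
  fixes f :: "real ^ 'd::finite \<Rightarrow> real"
  assumes "continuous_on unit_cube f" "m \<in> cells (2 ^ N)" "E \<subseteq> {s. m s \<noteq> 0}"
  shows "((\<lambda>x. f (x - dyadic_shift N E)) has_integral
           integral (dyadic_cell N (\<lambda>s. if s \<in> E then m s - 1 else m s)) f) (dyadic_cell N m)"
proof -
  define w where "w = (\<lambda>s. if s \<in> E then m s - 1 else m s)"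
  have "w \<in> cells (2 ^ N)"
    using assms(2) by (auto simp: cells_iff w_def less_imp_diff_less)
  moreover have "cell_lo N w = cell_lo N m + - dyadic_shift N E" "cell_hi N w = cell_hi N m + - dyadic_shift N E"
    using assms(3) by (auto simp: vec_eq_iff cell_lo_def cell_hi_def dyadic_shift_def w_def
        of_nat_diff diff_divide_distrib add_divide_distrib)
  then have "dyadic_cell N w = cbox (cell_lo N m + - dyadic_shift N E) (cell_hi N m + - dyadic_shift N E)"
    by (simp add: dyadic_cell_def)
  ultimately have "(f has_integral integral (dyadic_cell N w) f)
      (cbox (cell_lo N m + - dyadic_shift N E) (cell_hi N m + - dyadic_shift N E))"
    using integrable_on_dyadic_cell[OF assms(1)] by (metis integrable_integral)
  then show ?thesis
    unfolding has_integral_shift_cbox_iff[symmetric] dyadic_cell_def w_def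
    by (simp add: o_def add.commute)
qed

lemma has_integral_backward_diff_cell_avg:
  fixes f :: "real ^ 'd::finite \<Rightarrow> real"
  assumes "continuous_on unit_cube f" "i \<in> cells (2 ^ N)"
  defines "S \<equiv> {s. i s \<noteq> 0}"
  shows "((\<lambda>x. box_incr_on S f (x - dyadic_shift N S) x) has_integral
           backward_diff (cell_avg N f) i / 2 ^ (N * CARD('d))) (dyadic_cell N i)"
proof -
  have "(\<chi> s. if s \<in> E then (x - dyadic_shift N S) $ s else x $ s) = x - dyadic_shift N E" if "E \<subseteq> S" for x E
    using that by (auto simp: vec_eq_iff dyadic_shift_def)
  then have "box_incr_on S f (x - dyadic_shift N S) x = (\<Sum>E\<in>Pow S. (-1) ^ card E * f (x - dyadic_shift N E))" for x
    unfolding box_incr_on_def by (intro sum.cong) auto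
  moreover have "((\<lambda>x. \<Sum>E\<in>Pow S. (-1) ^ card E * f (x - dyadic_shift N E)) has_integral
      (\<Sum>E\<in>Pow S. (-1) ^ card E * integral (dyadic_cell N (\<lambda>s. if s \<in> E then i s - 1 else i s)) f)) (dyadic_cell N i)"
    using assms by (intro has_integral_sum has_integral_mult_right has_integral_shifted_dyadic_cell) auto
  ultimately show ?thesis
    by (simp add: backward_diff_def cell_avg_def S_def sum_divide_distrib)
qed

lemma dyadic_shift_in_unit_cube:
  assumes "i \<in> cells (2 ^ N)" "x \<in> dyadic_cell N i"
  shows "x - dyadic_shift N {s. i s \<noteq> 0} \<in> unit_cube"
proof -
  define S where "S = {s. i s \<noteq> 0}"
  have "x \<in> unit_cube"
    using dyadic_cell_subset_unit_cube[OF assms(1)] assms(2) by blast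
  have lower: "1 / 2 ^ N \<le> x $ s" if "s \<in> S" for s
  proof -
    have "1 / 2 ^ N \<le> real (i s) / 2 ^ N"
      using that by (simp add: S_def divide_right_mono)
    then show ?thesis
      using assms(2) by (meson mem_dyadic_cell order_trans)
  qed
  have "0 \<le> (x - dyadic_shift N S) $ s \<and> (x - dyadic_shift N S) $ s \<le> 1" for s
  proof (cases "s \<in> S")
    case True
    have "(x - dyadic_shift N S) $ s = x $ s - 1 / 2 ^ N" "(0::real) < 1 / 2 ^ N" "x $ s \<le> 1"
      using True \<open>x \<in> unit_cube\<close> by (simp_all add: dyadic_shift_def mem_unit_cube)
    then show ?thesis
      using lower[OF True] by linarith
  next
    case False
    then show ?thesis
      using \<open>x \<in> unit_cube\<close> by (simp add: dyadic_shift_def mem_unit_cube)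
  qed
  then show ?thesis
    by (simp add: mem_unit_cube S_def)
qed

lemma sum_cells_weight_le:
  "(\<Sum>i\<in>cells (2 ^ N). (1 / 2 ^ N :: real) ^ card {s::'d::finite. i s \<noteq> 0}) \<le> 2 ^ CARD('d)"
proof -
  have weight: "(1 / 2 ^ N :: real) ^ card {s::'d. i s \<noteq> 0} = (\<Prod>s\<in>UNIV. if i s \<noteq> 0 then 1 / 2 ^ N else 1)"
    for i :: "'d \<Rightarrow> nat"
    by (simp add: prod.If_cases Int_def)
  have "(\<Sum>i\<in>cells (2 ^ N). (1 / 2 ^ N :: real) ^ card {s::'d. i s \<noteq> 0}) =
      (\<Prod>s\<in>(UNIV :: 'd set). \<Sum>t<(2::nat) ^ N. if t \<noteq> 0 then 1 / 2 ^ N else 1)"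
    unfolding cells_def weight by (rule prod_sum_PiE[symmetric]) auto
  also have "\<dots> \<le> (\<Prod>s\<in>(UNIV :: 'd set). 2)"
  proof (intro prod_mono conjI)
    have "(\<Sum>t<(2::nat) ^ N. if t \<noteq> 0 then 1 / 2 ^ N else (1::real)) \<le> (\<Sum>t<(2::nat) ^ N. 1 / 2 ^ N + of_bool (t = 0))"
      by (intro sum_mono) auto
    also have "\<dots> = 2"
      by (simp add: sum.distrib)
    finally show "(\<Sum>t<(2::nat) ^ N. if t \<noteq> 0 then 1 / 2 ^ N else (1::real)) \<le> 2" .
  qed (auto intro: sum_nonneg)
  finally show ?thesis
    by simp
qed

lemma dyadic_cell_subset_parent: "dyadic_cell (N + l) j \<subseteq> dyadic_cell N (\<lambda>s. j s div 2 ^ l)"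
proof
  have lower: "real (k div 2 ^ l) / 2 ^ N \<le> real k / 2 ^ (N + l)" for k :: nat
  proof -
    have "k div 2 ^ l * 2 ^ l \<le> k"
      by simp
    then have "real (k div 2 ^ l) * 2 ^ l \<le> real k"
      using of_nat_le_iff[of "k div 2 ^ l * 2 ^ l" k, where 'a = real] by simp
    then have "real (k div 2 ^ l) * 2 ^ l / 2 ^ (N + l) \<le> real k / 2 ^ (N + l)"
      by (simp add: divide_right_mono)
    then show ?thesis
      by (simp add: power_add)
  qed
  have upper: "(real k + 1) / 2 ^ (N + l) \<le> (real (k div 2 ^ l) + 1) / 2 ^ N" for k :: nat
  proof -
    have "k + 1 \<le> (k div 2 ^ l + 1) * 2 ^ l"
      using dividend_less_div_times[of "2 ^ l" k] by simp
    then have "real k + 1 \<le> (real (k div 2 ^ l) + 1) * 2 ^ l"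
      using of_nat_le_iff[of "k + 1" "(k div 2 ^ l + 1) * 2 ^ l", where 'a = real] by (simp add: distrib_right)
    then have "(real k + 1) / 2 ^ (N + l) \<le> (real (k div 2 ^ l) + 1) * 2 ^ l / 2 ^ (N + l)"
      by (simp add: divide_right_mono)
    then show ?thesis
      by (simp add: power_add)
  qed
  fix x assume "x \<in> dyadic_cell (N + l) j"
  then show "x \<in> dyadic_cell N (\<lambda>s. j s div 2 ^ l)"
    unfolding mem_dyadic_cell by (meson lower upper order_trans)
qed

lemma dyadic_cell_near_lo:
  assumes "x \<in> dyadic_cell N m"
  shows "\<bar>x $ s - cell_lo N m $ s\<bar> \<le> 1 / 2 ^ N"
proof -
  have "real (m s) / 2 ^ N \<le> x $ s" "x $ s \<le> real (m s) / 2 ^ N + 1 / 2 ^ N"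
    using assms by (auto simp: mem_dyadic_cell add_divide_distrib)
  then show ?thesis
    by (simp add: cell_lo_def abs_le_iff)
qed

lemma cell_avg_refine_close:
  fixes f :: "real ^ 'd::finite \<Rightarrow> real"
  assumes "continuous_on unit_cube f" "j \<in> cells (2 ^ (N + l))"
    and close: "\<And>x x'. x \<in> unit_cube \<Longrightarrow> x' \<in> unit_cube \<Longrightarrow> (\<forall>s. \<bar>x $ s - x' $ s\<bar> \<le> 1 / 2 ^ N) \<Longrightarrow>
      \<bar>f x - f x'\<bar> \<le> \<eta>"
  shows "\<bar>cell_avg (N + l) f j - cell_avg N f (\<lambda>s. j s div 2 ^ l)\<bar> \<le> 2 * \<eta>"
proof -
  define m where "m = (\<lambda>s. j s div 2 ^ l)"
  have m: "m \<in> cells (2 ^ N)"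
    using assms(2) by (auto simp: cells_iff m_def power_add less_mult_imp_div_less)
  have near: "\<bar>f x - f (cell_lo N m)\<bar> \<le> \<eta>" if "x \<in> dyadic_cell N m" for x
    using that dyadic_cell_subset_unit_cube[OF m] cell_lo_in_dyadic_cell dyadic_cell_near_lo
    by (intro close) auto
  have "\<bar>cell_avg (N + l) f j - f (cell_lo N m)\<bar> \<le> \<eta>"
    using near dyadic_cell_subset_parent[of N l j] by (intro cell_avg_close assms(1,2)) (auto simp: m_def)
  moreover have "\<bar>cell_avg N f m - f (cell_lo N m)\<bar> \<le> \<eta>"
    using near by (intro cell_avg_close assms(1) m)
  ultimately show ?thesis
    unfolding m_def by linarith
qed

section \<open>Mixed differences of smooth functions\<close>

lemma continuous_on_box_incr_on_shift:
  fixes G :: "real ^ 'd::finite \<Rightarrow> real"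
  assumes "continuous_on unit_cube G" "a \<in> unit_cube" "\<And>t. t \<in> I \<Longrightarrow> b + t *\<^sub>R axis s 1 \<in> unit_cube"
  shows "continuous_on I (\<lambda>t. box_incr_on T G a (b + t *\<^sub>R axis s 1))"
proof -
  have "continuous_on I (\<lambda>t. G (\<chi> i. if i \<in> E then a $ i else (b + t *\<^sub>R axis s 1) $ i))" for E
  proof (rule continuous_on_compose2[OF assms(1)])
    show "continuous_on I (\<lambda>t. \<chi> i. if i \<in> E then a $ i else (b + t *\<^sub>R axis s 1) $ i)"
    proof (intro continuous_on_vec_lambda)
      fix i
      show "continuous_on I (\<lambda>t. if i \<in> E then a $ i else (b + t *\<^sub>R axis s 1) $ i)"
        by (cases "i \<in> E") (auto intro!: continuous_intros)
    qed
    show "(\<lambda>t. \<chi> i. if i \<in> E then a $ i else (b + t *\<^sub>R axis s 1) $ i) ` I \<subseteq> unit_cube"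
      using assms(2,3) by (auto simp: mem_unit_cube)
  qed
  then show ?thesis
    unfolding box_incr_on_def by (intro continuous_intros)
qed

lemma axis_shift_in_unit_cube:
  assumes "b \<in> unit_cube" "0 \<le> b $ s + t" "b $ s + t \<le> 1"
  shows "b + t *\<^sub>R axis s 1 \<in> unit_cube"
  using assms by (auto simp: mem_unit_cube axis_def)

definition mixed_index :: "'d set \<Rightarrow> 'd \<Rightarrow> nat" where
  "mixed_index U = (\<lambda>s. if s \<in> U then 1 else 0)"

lemma sum_mixed_index: "sum (mixed_index U) (UNIV :: 'd::finite set) = card U"
  by (simp add: mixed_index_def sum.If_cases)

lemma mixed_index_insert: "s \<notin> U \<Longrightarrow> (mixed_index U)(s := Suc (mixed_index U s)) = mixed_index (insert s U)"
  by (auto simp: mixed_index_def fun_eq_iff)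

locale bounded_mixed_derivatives =
  fixes D :: "('d::finite \<Rightarrow> nat) \<Rightarrow> real ^ 'd \<Rightarrow> real" and M :: real
  assumes continuous_on_D: "\<And>\<alpha>. sum \<alpha> UNIV \<le> CARD('d) \<Longrightarrow> continuous_on unit_cube (D \<alpha>)"
    and has_derivative_D: "\<And>\<alpha> s x. sum \<alpha> UNIV < CARD('d) \<Longrightarrow> x \<in> unit_cube \<Longrightarrow>
          ((\<lambda>t. D \<alpha> (x + t *\<^sub>R axis s 1)) has_real_derivative D (\<alpha>(s := Suc (\<alpha> s))) x)
            (at 0 within {t. x + t *\<^sub>R axis s 1 \<in> unit_cube})"
    and mixed_bound: "\<And>U x. x \<in> unit_cube \<Longrightarrow> \<bar>D (mixed_index U) x\<bar> \<le> M"
begin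

lemma M_nonneg: "0 \<le> M"
  using mixed_bound[of 0 "{}"] by simp

lemma continuous_on_mixed: "continuous_on unit_cube (D (mixed_index U))"
  by (rule continuous_on_D) (simp add: sum_mixed_index card_mono)

lemma mixed_has_real_derivative:
  assumes "s \<notin> U" "x \<in> unit_cube" "0 < x $ s" "x $ s < 1"
  shows "((\<lambda>t. D (mixed_index U) (x + t *\<^sub>R axis s 1)) has_real_derivative D (mixed_index (insert s U)) x) (at 0)"
proof -
  have "U \<subset> UNIV"
    using assms(1) by auto
  then have "sum (mixed_index U) UNIV < CARD('d)"
    by (simp add: sum_mixed_index psubset_card_mono)
  then have "((\<lambda>t. D (mixed_index U) (x + t *\<^sub>R axis s 1)) has_real_derivative D (mixed_index (insert s U)) x)
      (at 0 within {t. x + t *\<^sub>R axis s 1 \<in> unit_cube})"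
    using has_derivative_D[OF _ assms(2), of "mixed_index U" s] by (simp add: mixed_index_insert[OF assms(1)])
  moreover have "{- (x $ s)<..<1 - x $ s} \<subseteq> {t. x + t *\<^sub>R axis s 1 \<in> unit_cube}"
    using assms(2) by (auto simp: mem_unit_cube axis_def)
  moreover have "at 0 within {- (x $ s)<..<1 - x $ s} = at 0"
    using assms(3,4) by (intro at_within_open) auto
  ultimately show ?thesis
    by (metis DERIV_subset)
qed

lemma box_incr_on_shift_has_real_derivative:
  assumes "finite T" "s \<notin> T" "s \<notin> U" "a \<in> unit_cube" "b + t *\<^sub>R axis s 1 \<in> unit_cube"
    and "0 < b $ s + t" "b $ s + t < 1"
  shows "((\<lambda>u. box_incr_on T (D (mixed_index U)) a (b + u *\<^sub>R axis s 1)) has_real_derivative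
           box_incr_on T (D (mixed_index (insert s U))) a (b + t *\<^sub>R axis s 1)) (at t)"
  unfolding box_incr_on_def
proof (intro DERIV_sum DERIV_cmult)
  fix E assume "E \<in> Pow T"
  define x where "x = (\<chi> i. if i \<in> E then a $ i else (b + t *\<^sub>R axis s 1) $ i)"
  have "(\<chi> i. if i \<in> E then a $ i else (b + u *\<^sub>R axis s 1) $ i) = x + (u - t) *\<^sub>R axis s 1" for u
    using \<open>E \<in> Pow T\<close> assms(2) by (auto simp: x_def vec_eq_iff axis_def)
  then have shift: "(\<lambda>u. D (mixed_index U) (\<chi> i. if i \<in> E then a $ i else (b + u *\<^sub>R axis s 1) $ i)) =
      (\<lambda>u. D (mixed_index U) (x + (u - t) *\<^sub>R axis s 1))"
    by simp
  have "x \<in> unit_cube" "x $ s = b $ s + t"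
    using assms(2,4,5) \<open>E \<in> Pow T\<close> by (auto simp: x_def mem_unit_cube axis_def)
  then have "((\<lambda>u. D (mixed_index U) (x + u *\<^sub>R axis s 1)) has_real_derivative D (mixed_index (insert s U)) x) (at 0)"
    using assms(3,6,7) by (intro mixed_has_real_derivative) auto
  then have "((\<lambda>u. D (mixed_index U) (x + (u - t) *\<^sub>R axis s 1)) has_real_derivative D (mixed_index (insert s U)) x) (at t)"
    using DERIV_shift[of "\<lambda>u. D (mixed_index U) (x + u *\<^sub>R axis s 1)" _ t "- t"] by simp
  then show "((\<lambda>u. D (mixed_index U) (\<chi> i. if i \<in> E then a $ i else (b + u *\<^sub>R axis s 1) $ i))
      has_real_derivative D (mixed_index (insert s U)) (\<chi> i. if i \<in> E then a $ i else (b + t *\<^sub>R axis s 1) $ i)) (at t)"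
    by (simp only: shift x_def[symmetric])
qed

lemma box_incr_on_insert_mean_value:
  assumes "finite T" "s \<notin> T" "s \<notin> U" "a \<in> unit_cube" "b \<in> unit_cube" "a $ s < b $ s"
  obtains \<xi> where "a $ s - b $ s < \<xi>" "\<xi> < 0"
    "box_incr_on (insert s T) (D (mixed_index U)) a b =
       box_incr_on T (D (mixed_index (insert s U))) a (b + \<xi> *\<^sub>R axis s 1) * (b $ s - a $ s)"
proof -
  define \<psi> where "\<psi> U' t = box_incr_on T (D (mixed_index U')) a (b + t *\<^sub>R axis s 1)" for U' t
  have ab: "0 \<le> a $ s" "b $ s \<le> 1"
    using assms(4,5) by (simp_all add: mem_unit_cube)
  have shifted: "b + t *\<^sub>R axis s 1 \<in> unit_cube" if "a $ s - b $ s \<le> t" "t \<le> 0" for t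
    using that ab by (intro axis_shift_in_unit_cube assms(5)) auto
  have "continuous_on {a $ s - b $ s..0} (\<psi> U)"
    unfolding \<psi>_def using shifted assms(4) by (intro continuous_on_box_incr_on_shift continuous_on_mixed) auto
  moreover have "(\<psi> U has_real_derivative \<psi> (insert s U) t) (at t)" if "a $ s - b $ s < t" "t < 0" for t
    unfolding \<psi>_def
  proof (rule box_incr_on_shift_has_real_derivative)
    show "0 < b $ s + t" "b $ s + t < 1"
      using that ab by auto
  qed (use that assms shifted in auto)
  ultimately obtain \<xi> where "a $ s - b $ s < \<xi>" "\<xi> < 0"
    "\<psi> U 0 - \<psi> U (a $ s - b $ s) = \<psi> (insert s U) \<xi> * (0 - (a $ s - b $ s))"
    using mvt[of "a $ s - b $ s" 0 "\<psi> U" "\<lambda>t. (*) (\<psi> (insert s U) t)"] assms(6)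
    unfolding has_field_derivative_def by auto
  moreover have "box_incr_on (insert s T) (D (mixed_index U)) a b = \<psi> U 0 - \<psi> U (a $ s - b $ s)"
    using box_incr_on_insert[OF assms(1,2)] by (simp add: \<psi>_def)
  ultimately show ?thesis
    using that by (simp add: \<psi>_def)
qed

lemma box_incr_on_mixed_bound:
  assumes "finite T" "T \<inter> U = {}" "a \<in> unit_cube" "b \<in> unit_cube" "\<forall>s. a $ s \<le> b $ s"
  shows "\<bar>box_incr_on T (D (mixed_index U)) a b\<bar> \<le> M * (\<Prod>s\<in>T. b $ s - a $ s)"
  using assms
proof (induction T arbitrary: U b rule: finite_induct)
  case empty
  then show ?case
    using mixed_bound[of b U] by (simp add: box_incr_on_def)
next
  case (insert s T)
  show ?case
  proof (cases "a $ s = b $ s")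
    case True
    then show ?thesis
      using box_incr_on_insert[OF insert.hyps] M_nonneg insert.prems(4) by (simp add: prod_nonneg)
  next
    case False
    then have "a $ s < b $ s"
      using insert.prems(4) by (simp add: order_less_le)
    then obtain \<xi> where \<xi>: "a $ s - b $ s < \<xi>" "\<xi> < 0" and incr:
      "box_incr_on (insert s T) (D (mixed_index U)) a b =
         box_incr_on T (D (mixed_index (insert s U))) a (b + \<xi> *\<^sub>R axis s 1) * (b $ s - a $ s)"
      using box_incr_on_insert_mean_value[OF insert.hyps] insert.prems by blast
    have "0 \<le> a $ s" "b $ s \<le> 1"
      using insert.prems(2,3) by (simp_all add: mem_unit_cube)
    then have "b + \<xi> *\<^sub>R axis s 1 \<in> unit_cube"
      using \<xi> by (intro axis_shift_in_unit_cube insert.prems(3)) auto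
    moreover have "\<forall>i. a $ i \<le> (b + \<xi> *\<^sub>R axis s 1) $ i"
      using \<xi> insert.prems(4) by (auto simp: axis_def)
    ultimately have "\<bar>box_incr_on T (D (mixed_index (insert s U))) a (b + \<xi> *\<^sub>R axis s 1)\<bar> \<le>
        M * (\<Prod>i\<in>T. (b + \<xi> *\<^sub>R axis s 1) $ i - a $ i)"
      using insert.prems(1,2) insert.hyps(2) by (intro insert.IH) auto
    also have "(\<Prod>i\<in>T. (b + \<xi> *\<^sub>R axis s 1) $ i - a $ i) = (\<Prod>i\<in>T. b $ i - a $ i)"
      using insert.hyps(2) by (intro prod.cong) (auto simp: axis_def)
    finally show ?thesis
      using \<open>a $ s < b $ s\<close> insert.hyps by (simp add: incr abs_mult mult_right_mono mult_ac)
  qed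
qed

lemma backward_diff_cell_avg_bound:
  assumes "i \<in> cells (2 ^ N)"
  shows "\<bar>backward_diff (cell_avg N (D (mixed_index {}))) i\<bar> \<le> M * (1 / 2 ^ N) ^ card {s. i s \<noteq> 0}"
proof -
  define S where "S = {s. i s \<noteq> 0}"
  have "\<bar>box_incr_on S (D (mixed_index {})) (x - dyadic_shift N S) x\<bar> \<le> M * (1 / 2 ^ N) ^ card S"
    if x: "x \<in> dyadic_cell N i" for x
  proof -
    have "x \<in> unit_cube"
      using dyadic_cell_subset_unit_cube[OF assms] x by blast
    moreover have "x - dyadic_shift N S \<in> unit_cube"
      unfolding S_def by (rule dyadic_shift_in_unit_cube[OF assms x])
    ultimately have "\<bar>box_incr_on S (D (mixed_index {})) (x - dyadic_shift N S) x\<bar> \<le>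
        M * (\<Prod>s\<in>S. x $ s - (x - dyadic_shift N S) $ s)"
      by (intro box_incr_on_mixed_bound) (auto simp: dyadic_shift_def)
    then show ?thesis
      by (simp add: dyadic_shift_def)
  qed
  moreover have int: "((\<lambda>x. box_incr_on S (D (mixed_index {})) (x - dyadic_shift N S) x) has_integral
      backward_diff (cell_avg N (D (mixed_index {}))) i / 2 ^ (N * CARD('d))) (dyadic_cell N i)"
    unfolding S_def by (rule has_integral_backward_diff_cell_avg[OF continuous_on_mixed assms])
  ultimately have "2 ^ (N * CARD('d)) *
      \<bar>integral (dyadic_cell N i) (\<lambda>x. box_incr_on S (D (mixed_index {})) (x - dyadic_shift N S) x)\<bar> \<le>
      M * (1 / 2 ^ N) ^ card S"
    by (intro scaled_integral_dyadic_cell_bound) (auto intro: has_integral_integrable)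
  then show ?thesis
    unfolding integral_unique[OF int] by (simp add: S_def)
qed

lemma stieltjes_sum_bound:
  assumes "y \<in> unit_cube" "\<And>x. x \<in> unit_cube \<Longrightarrow> \<bar>F x\<bar> \<le> B"
  shows "\<bar>stieltjes_sum F (D (mixed_index {})) N y\<bar> \<le> 4 ^ CARD('d) * M * B"
proof -
  have "0 \<le> B"
    using assms(2)[of 0] by simp
  have "\<bar>stieltjes_sum F (D (mixed_index {})) N y\<bar> \<le>
      (\<Sum>i\<in>cells (2 ^ N). (M * (1 / 2 ^ N) ^ card {s::'d. i s \<noteq> 0}) * (2 ^ CARD('d) * B))"
    unfolding stieltjes_sum_by_parts[OF assms(1)]
  proof (rule order_trans[OF sum_abs], intro sum_mono)
    fix i :: "'d \<Rightarrow> nat" assume "i \<in> cells (2 ^ N)"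
    then show "\<bar>backward_diff (cell_avg N (D (mixed_index {}))) i * box_incr F (grid_pt N y i) y\<bar> \<le>
        M * (1 / 2 ^ N) ^ card {s. i s \<noteq> 0} * (2 ^ CARD('d) * B)"
      unfolding abs_mult using assms M_nonneg
      by (intro mult_mono backward_diff_cell_avg_bound box_incr_bound grid_pt_in_unit_cube) auto
  qed
  also have "\<dots> = M * (2 ^ CARD('d) * B) * (\<Sum>i\<in>cells (2 ^ N). (1 / 2 ^ N :: real) ^ card {s::'d. i s \<noteq> 0})"
    by (simp add: sum_distrib_left sum_distrib_right mult_ac)
  also have "\<dots> \<le> M * (2 ^ CARD('d) * B) * 2 ^ CARD('d)"
    using M_nonneg \<open>0 \<le> B\<close> by (intro mult_left_mono sum_cells_weight_le) auto
  also have "\<dots> = 4 ^ CARD('d) * M * B"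
    by (simp add: power_mult_distrib[symmetric] mult_ac)
  finally show ?thesis .
qed

end

section \<open>Integrators with bounded mixed density\<close>

definition mixed_lipschitz :: "real \<Rightarrow> (real ^ 'd::finite \<Rightarrow> real) \<Rightarrow> bool" where
  "mixed_lipschitz L F \<longleftrightarrow>
     (\<forall>a\<in>unit_cube. \<forall>b\<in>unit_cube. (\<forall>s. a $ s \<le> b $ s) \<longrightarrow> \<bar>box_incr F a b\<bar> \<le> L * (\<Prod>s\<in>UNIV. b $ s - a $ s))"

lemma mixed_lipschitz_grid_cell_bound:
  fixes F :: "real ^ 'd::finite \<Rightarrow> real"
  assumes "mixed_lipschitz L F" "0 \<le> L" "y \<in> unit_cube"
  shows "\<bar>box_incr F (grid_pt K y j) (grid_pt K y (\<lambda>s. Suc (j s)))\<bar> \<le> L * (1 / 2 ^ K) ^ CARD('d)"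
proof -
  have "\<bar>box_incr F (grid_pt K y j) (grid_pt K y (\<lambda>s. Suc (j s)))\<bar> \<le>
      L * (\<Prod>s\<in>UNIV. grid_pt K y (\<lambda>s. Suc (j s)) $ s - grid_pt K y j $ s)"
    using assms(1,3) grid_pt_in_unit_cube grid_pt_step unfolding mixed_lipschitz_def by blast
  also have "\<dots> \<le> L * (\<Prod>s\<in>(UNIV :: 'd set). 1 / 2 ^ K)"
    by (intro mult_left_mono prod_mono assms(2)) (use grid_pt_step in auto)
  finally show ?thesis
    by simp
qed

lemma stieltjes_sum_refine_close:
  fixes F f :: "real ^ 'd::finite \<Rightarrow> real"
  assumes "mixed_lipschitz L F" "0 \<le> L" "y \<in> unit_cube" "continuous_on unit_cube f"
    and close: "\<And>x x'. x \<in> unit_cube \<Longrightarrow> x' \<in> unit_cube \<Longrightarrow> (\<forall>s. \<bar>x $ s - x' $ s\<bar> \<le> 1 / 2 ^ N) \<Longrightarrow>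
      \<bar>f x - f x'\<bar> \<le> \<eta>"
  shows "\<bar>stieltjes_sum F f (N + l) y - stieltjes_sum F f N y\<bar> \<le> 2 * \<eta> * L"
proof -
  let ?R = "\<lambda>j. box_incr F (grid_pt (N + l) y j) (grid_pt (N + l) y (\<lambda>s. Suc (j s)))"
  have "stieltjes_sum F f (N + l) y - stieltjes_sum F f N y =
      (\<Sum>j\<in>cells (2 ^ (N + l)). (cell_avg (N + l) f j - cell_avg N f (\<lambda>s. j s div 2 ^ l)) * ?R j)"
    unfolding stieltjes_sum_refine[of F f N y l] by (simp add: stieltjes_sum_def left_diff_distrib sum_subtractf)
  also have "\<bar>\<dots>\<bar> \<le> (\<Sum>j\<in>(cells (2 ^ (N + l)) :: ('d \<Rightarrow> nat) set). (2 * \<eta>) * (L * (1 / 2 ^ (N + l)) ^ CARD('d)))"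
  proof (rule order_trans[OF sum_abs sum_mono])
    fix j :: "'d \<Rightarrow> nat" assume "j \<in> cells (2 ^ (N + l))"
    then show "\<bar>(cell_avg (N + l) f j - cell_avg N f (\<lambda>s. j s div 2 ^ l)) * ?R j\<bar> \<le>
        (2 * \<eta>) * (L * (1 / 2 ^ (N + l)) ^ CARD('d))"
      unfolding abs_mult using assms close[of 0 0]
      by (intro mult_mono cell_avg_refine_close mixed_lipschitz_grid_cell_bound) auto
  qed
  also have "\<dots> = 2 * \<eta> * L"
    by (simp add: card_cells power_one_over[symmetric] power_mult_distrib[symmetric])
  finally show ?thesis .
qed

lemma lipschitz_on_mult_bounded:
  fixes f g :: "'a::metric_space \<Rightarrow> real"
  assumes "C1-lipschitz_on U f" "C2-lipschitz_on U g"
    and "0 \<le> B1" "\<And>x. x \<in> U \<Longrightarrow> \<bar>f x\<bar> \<le> B1" "0 \<le> B2" "\<And>x. x \<in> U \<Longrightarrow> \<bar>g x\<bar> \<le> B2"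
  shows "(B1 * C2 + B2 * C1)-lipschitz_on U (\<lambda>x. f x * g x)"
proof (rule lipschitz_onI)
  fix x y assume "x \<in> U" "y \<in> U"
  have "f x * g x - f y * g y = f x * (g x - g y) + g y * (f x - f y)"
    by (simp add: algebra_simps)
  then have "\<bar>f x * g x - f y * g y\<bar> \<le> \<bar>f x\<bar> * \<bar>g x - g y\<bar> + \<bar>g y\<bar> * \<bar>f x - f y\<bar>"
    by (metis abs_mult abs_triangle_ineq)
  also have "\<dots> \<le> B1 * (C2 * dist x y) + B2 * (C1 * dist x y)"
    using assms \<open>x \<in> U\<close> \<open>y \<in> U\<close> by (intro add_mono mult_mono) (auto simp: dist_real_def dest: lipschitz_onD)
  finally show "dist (f x * g x) (f y * g y) \<le> (B1 * C2 + B2 * C1) * dist x y"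
    by (simp add: dist_real_def algebra_simps)
next
  show "0 \<le> B1 * C2 + B2 * C1"
    using assms by (simp add: lipschitz_on_nonneg)
qed

lemma lipschitz_on_01_mult:
  fixes f g :: "real \<Rightarrow> real"
  assumes "C1-lipschitz_on {0..1} f" "C2-lipschitz_on {0..1} g"
  shows "\<exists>C. C-lipschitz_on {0..1} (\<lambda>u. f u * g u)"
proof -
  have bound: "\<bar>h u\<bar> \<le> \<bar>h 0\<bar> + C" if "C-lipschitz_on {0..1} h" "u \<in> {0..1}" for h :: "real \<Rightarrow> real" and C u
  proof -
    have "\<bar>h u - h 0\<bar> \<le> C * \<bar>u - 0\<bar>"
      using lipschitz_onD[OF that(1) that(2), of 0] by (simp add: dist_real_def)
    also have "\<dots> \<le> C"
      using that lipschitz_on_nonneg[OF that(1)] by (simp add: mult_left_le)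
    finally show ?thesis
      using abs_triangle_ineq[of "h u - h 0" "h 0"] by simp
  qed
  have "0 \<le> \<bar>h 0\<bar> + C" if "C-lipschitz_on {0..1} h" for h :: "real \<Rightarrow> real" and C
    using lipschitz_on_nonneg[OF that] by simp
  then show ?thesis
    using lipschitz_on_mult_bounded[OF assms _ bound[OF assms(1)] _ bound[OF assms(2)]] assms by blast
qed

inductive lipschitz_product_sum :: "(real ^ 'd::finite \<Rightarrow> real) \<Rightarrow> bool" where
  prod: "(\<And>s. \<exists>C. C-lipschitz_on {0..1} (\<phi> s)) \<Longrightarrow> lipschitz_product_sum (\<lambda>x. \<Prod>s\<in>UNIV. \<phi> s (x $ s))"
| add: "lipschitz_product_sum F \<Longrightarrow> lipschitz_product_sum G \<Longrightarrow> lipschitz_product_sum (\<lambda>x. F x + G x)"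

lemma lipschitz_product_sum_mult_prod:
  assumes "lipschitz_product_sum G" "\<And>s. \<exists>C. C-lipschitz_on {0..1} (\<phi> s)"
  shows "lipschitz_product_sum (\<lambda>x. (\<Prod>s\<in>UNIV. \<phi> s (x $ s)) * G x)"
  using assms(1)
proof induction
  case (prod \<psi>)
  have "\<exists>C. C-lipschitz_on {0..1} (\<lambda>u. \<phi> s u * \<psi> s u)" for s
  proof -
    obtain C1 C2 where "C1-lipschitz_on {0..1} (\<phi> s)" "C2-lipschitz_on {0..1} (\<psi> s)"
      using assms(2) prod by blast
    then show ?thesis
      by (rule lipschitz_on_01_mult)
  qed
  then have "lipschitz_product_sum (\<lambda>x. \<Prod>s\<in>UNIV. \<phi> s (x $ s) * \<psi> s (x $ s))"
    using lipschitz_product_sum.prod[of "\<lambda>s u. \<phi> s u * \<psi> s u"] by simp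
  then show ?case
    by (simp add: prod.distrib)
next
  case (add G1 G2)
  then show ?case
    using lipschitz_product_sum.add[OF add.IH] by (simp add: distrib_left)
qed

lemma lipschitz_product_sum_mult:
  assumes "lipschitz_product_sum F" "lipschitz_product_sum G"
  shows "lipschitz_product_sum (\<lambda>x. F x * G x)"
  using assms(1)
proof induction
  case (prod \<phi>)
  then show ?case
    by (rule lipschitz_product_sum_mult_prod[OF assms(2)])
next
  case (add F1 F2)
  then show ?case
    using lipschitz_product_sum.add[OF add.IH] by (simp add: distrib_right)
qed

lemma lipschitz_product_sum_const: "lipschitz_product_sum (\<lambda>x :: real ^ 'd::finite. c)"
proof -
  obtain s0 :: 'd where True
    by blast
  have "(\<Prod>s\<in>UNIV. if s = s0 then c else 1) = c"
    by (simp add: prod.delta')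
  moreover have "\<exists>C. C-lipschitz_on {0..1} (\<lambda>u :: real. if s = s0 then c else 1)" for s
    using lipschitz_on_constant by blast
  ultimately show ?thesis
    using lipschitz_product_sum.prod[of "\<lambda>s u. if s = s0 then c else 1"] by simp
qed

lemma lipschitz_product_sum_component: "lipschitz_product_sum (\<lambda>x :: real ^ 'd::finite. x $ i)"
proof -
  have "(\<Prod>s\<in>UNIV. if s = i then x $ s else 1) = x $ i" for x :: "real ^ 'd"
    by (simp add: prod.delta')
  moreover have "\<exists>C. C-lipschitz_on {0..1} (\<lambda>u :: real. if s = i then u else 1)" for s
    using lipschitz_on_id lipschitz_on_constant by (cases "s = i") auto
  ultimately show ?thesis
    using lipschitz_product_sum.prod[of "\<lambda>s u. if s = i then u else 1"] by simp
qed

lemma mixed_lipschitz_prod: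
  assumes "\<And>s. (C s)-lipschitz_on {0..1} (\<phi> s)"
  shows "mixed_lipschitz (\<Prod>s\<in>UNIV. C s) (\<lambda>x :: real ^ 'd::finite. \<Prod>s\<in>UNIV. \<phi> s (x $ s))"
  unfolding mixed_lipschitz_def
proof (intro ballI impI)
  fix a b :: "real ^ 'd" assume "a \<in> unit_cube" "b \<in> unit_cube" "\<forall>s. a $ s \<le> b $ s"
  then have "\<bar>\<phi> s (b $ s) - \<phi> s (a $ s)\<bar> \<le> C s * (b $ s - a $ s)" for s
    using lipschitz_onD[OF assms, of "b $ s" "a $ s" s] by (auto simp: mem_unit_cube dist_real_def)
  then show "\<bar>box_incr (\<lambda>x. \<Prod>s\<in>UNIV. \<phi> s (x $ s)) a b\<bar> \<le> (\<Prod>s\<in>UNIV. C s) * (\<Prod>s\<in>UNIV. b $ s - a $ s)"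
    by (simp add: box_incr_prod abs_prod prod_mono flip: prod.distrib)
qed

lemma mixed_lipschitz_add:
  assumes "mixed_lipschitz L1 F" "mixed_lipschitz L2 G"
  shows "mixed_lipschitz (L1 + L2) (\<lambda>x. F x + G x)"
  unfolding mixed_lipschitz_def
proof (intro ballI impI)
  fix a b :: "real ^ 'a" assume "a \<in> unit_cube" "b \<in> unit_cube" "\<forall>s. a $ s \<le> b $ s"
  then have "\<bar>box_incr F a b\<bar> \<le> L1 * (\<Prod>s\<in>UNIV. b $ s - a $ s)" "\<bar>box_incr G a b\<bar> \<le> L2 * (\<Prod>s\<in>UNIV. b $ s - a $ s)"
    using assms unfolding mixed_lipschitz_def by blast+
  then show "\<bar>box_incr (\<lambda>x. F x + G x) a b\<bar> \<le> (L1 + L2) * (\<Prod>s\<in>UNIV. b $ s - a $ s)"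
    unfolding box_incr_on_add distrib_right by linarith
qed

lemma lipschitz_product_sum_imp_mixed_lipschitz:
  "lipschitz_product_sum F \<Longrightarrow> \<exists>L\<ge>0. mixed_lipschitz L F"
proof (induction rule: lipschitz_product_sum.induct)
  case (prod \<phi>)
  define C where "C s = (SOME C. C-lipschitz_on {0..1} (\<phi> s))" for s
  have C: "(C s)-lipschitz_on {0..1} (\<phi> s)" for s
    unfolding C_def by (rule someI_ex[OF prod])
  show ?case
  proof (intro exI conjI)
    show "0 \<le> (\<Prod>s\<in>UNIV. C s)"
      by (intro prod_nonneg) (simp add: lipschitz_on_nonneg[OF C])
    show "mixed_lipschitz (\<Prod>s\<in>UNIV. C s) (\<lambda>x. \<Prod>s\<in>UNIV. \<phi> s (x $ s))"
      by (rule mixed_lipschitz_prod[OF C])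
  qed
next
  case (add F G)
  then obtain L1 L2 where "0 \<le> L1" "mixed_lipschitz L1 F" "0 \<le> L2" "mixed_lipschitz L2 G"
    by blast
  then show ?case
    by (intro exI[of _ "L1 + L2"]) (simp add: mixed_lipschitz_add)
qed

lemma mixed_lipschitz_dense:
  fixes F :: "real ^ 'd::finite \<Rightarrow> real"
  assumes "continuous_on unit_cube F" "0 < \<delta>"
  obtains L G where "0 \<le> L" "mixed_lipschitz L G" "\<And>x. x \<in> unit_cube \<Longrightarrow> \<bar>F x - G x\<bar> \<le> \<delta>"
proof -
  have "\<exists>G. (lipschitz_product_sum G \<and> continuous_on unit_cube G) \<and> (\<forall>x\<in>unit_cube. \<bar>F x - G x\<bar> < \<delta>)"
  proof (rule Stone_Weierstrass_HOL[OF compact_unit_cube _ _ _ _ _ assms])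
    fix x y :: "real ^ 'd" assume "x \<in> unit_cube \<and> y \<in> unit_cube \<and> x \<noteq> y"
    then obtain i where "x $ i \<noteq> y $ i"
      by (auto simp: vec_eq_iff)
    then show "\<exists>G. (lipschitz_product_sum G \<and> continuous_on unit_cube G) \<and> G x \<noteq> G y"
      by (intro exI[of _ "\<lambda>x. x $ i"]) (auto simp: lipschitz_product_sum_component intro!: continuous_intros)
  qed (auto simp: lipschitz_product_sum_const intro: lipschitz_product_sum.add lipschitz_product_sum_mult continuous_intros)
  then obtain G where "lipschitz_product_sum G" "\<And>x. x \<in> unit_cube \<Longrightarrow> \<bar>F x - G x\<bar> < \<delta>"
    by blast
  with that show ?thesis
    using lipschitz_product_sum_imp_mixed_lipschitz by (meson less_imp_le)
qed

section \<open>Haar partial sums are dyadic cell averages\<close>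

definition non_dyadic :: "nat \<Rightarrow> real \<Rightarrow> bool" where
  "non_dyadic N t \<longleftrightarrow> (\<forall>q::int. 2 ^ N * t \<noteq> of_int q)"

lemma non_dyadic_mono:
  assumes "N \<le> N'" "non_dyadic N' t"
  shows "non_dyadic N t"
  unfolding non_dyadic_def
proof (intro allI notI)
  fix q :: int assume "2 ^ N * t = of_int q"
  moreover have "2 ^ N' * t = 2 ^ (N' - N) * (2 ^ N * t)"
    using assms(1) by (simp add: power_add[symmetric])
  ultimately have "2 ^ N' * t = of_int (2 ^ (N' - N) * q)"
    by simp
  then show False
    using assms(2) unfolding non_dyadic_def by blast
qed

lemma non_dyadic_floor_bounds:
  assumes "0 \<le> t" "t \<le> 1" "non_dyadic N t"
  shows "0 \<le> \<lfloor>2 ^ N * t\<rfloor>" "\<lfloor>2 ^ N * t\<rfloor> < 2 ^ N"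
proof -
  show "0 \<le> \<lfloor>2 ^ N * t\<rfloor>"
    using assms by simp
  have "2 ^ N * t \<noteq> of_int (2 ^ N)"
    using assms(3) unfolding non_dyadic_def by blast
  with assms(2) have "2 ^ N * t < 2 ^ N"
    by (simp add: order_le_less)
  then show "\<lfloor>2 ^ N * t\<rfloor> < 2 ^ N"
    by (simp add: floor_less_iff)
qed

lemma floor_pow2_div: "\<lfloor>2 ^ N * t\<rfloor> = \<lfloor>2 ^ (N + k) * t\<rfloor> div 2 ^ k" for t :: real
  using floor_divide_real_eq_div[of "2 ^ k" "2 ^ (N + k) * t"] by (simp add: power_add)

lemma floor_half: "\<lfloor>2 ^ N * t\<rfloor> = \<lfloor>2 ^ Suc N * t\<rfloor> div 2" for t :: real
  using floor_pow2_div[of N t 1] by simp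

lemma haar_lev_add:
  assumes "1 \<le> i" "i \<le> 2 ^ L"
  shows "haar_lev (2 ^ L + i) = L"
  unfolding haar_lev_def
proof (rule the_equality)
  fix j assume j: "2 ^ j < 2 ^ L + i \<and> 2 ^ L + i \<le> (2::nat) ^ Suc j"
  have "(2::nat) ^ Suc j \<le> 2 ^ L" if "j < L"
    using that by (intro power_increasing) auto
  moreover have "(2::nat) ^ Suc L \<le> 2 ^ j" if "L < j"
    using that by (intro power_increasing) auto
  ultimately show "j = L"
    using j assms by (cases j L rule: linorder_cases) auto
qed (use assms in simp)

lemma haar_pos_add: "1 \<le> i \<Longrightarrow> i \<le> 2 ^ L \<Longrightarrow> haar_pos (2 ^ L + i) = i"
  by (simp add: haar_pos_def haar_lev_add)

lemma haar_formula:
  assumes i: "1 \<le> i" "i \<le> 2^L" and nd: "non_dyadic (Suc L) t"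
  shows "haar (2^L + i) t = 2 powr (real L / 2) *
     (if \<lfloor>2^Suc L * t\<rfloor> = 2 * int i - 2 then 1 else if \<lfloor>2^Suc L * t\<rfloor> = 2 * int i - 1 then -1 else 0)"
proof -
  define P :: real where "P = 2^Suc L"
  define T where "T = P * t"
  have P0: "0 < P" by (simp add: P_def)
  have "(1::nat) \<le> 2 ^ L"
    by simp
  then have n1: "2 ^ L + i \<noteq> 1"
    using i(1) by linarith
  have Tne: "T \<noteq> of_int q" for q using nd unfolding non_dyadic_def T_def P_def by simp
  have e1: "(real i - 1) / 2^L = (2 * real i - 2) / P" by (simp add: P_def field_simps)
  have e2: "(2 * real i - 1) / 2^Suc L = (2 * real i - 1) / P" by (simp add: P_def)
  have e3: "real i / 2^L = (2 * real i) / P" by (simp add: P_def field_simps)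
  have lt1: "c / P < t \<longleftrightarrow> c < T" for c using P0 by (simp add: T_def divide_less_eq mult.commute)
  have lt2: "t < c / P \<longleftrightarrow> T < c" for c using P0 by (simp add: T_def less_divide_eq mult.commute)
  have eq: "t = c / P \<longleftrightarrow> T = c" for c using P0 by (auto simp: T_def field_simps)
  have ne1: "T \<noteq> 2 * real i - 2" using Tne[of "2 * int i - 2"] by simp
  have ne2: "T \<noteq> 2 * real i - 1" using Tne[of "2 * int i - 1"] by simp
  have ne3: "T \<noteq> 2 * real i" using Tne[of "2 * int i"] by simp
  have f1: "\<lfloor>T\<rfloor> = 2 * int i - 2 \<longleftrightarrow> 2 * real i - 2 < T \<and> T < 2 * real i - 1"
    using ne1 by (auto simp: floor_eq_iff)
  have f2: "\<lfloor>T\<rfloor> = 2 * int i - 1 \<longleftrightarrow> 2 * real i - 1 < T \<and> T < 2 * real i"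
    using ne2 by (auto simp: floor_eq_iff)
  show ?thesis
    unfolding haar_def Let_def haar_lev_add[OF i] haar_pos_add[OF i] e1 e2 e3 lt1 lt2 eq
    using n1 ne1 ne2 ne3 f1 f2 by (simp add: T_def P_def)
qed

lemma haar_eq_floor:
  assumes "1 \<le> i" "i \<le> 2 ^ L" "non_dyadic (Suc L) t"
  shows "haar (2 ^ L + i) t = 2 powr (real L / 2) *
    (of_bool (\<lfloor>2 ^ Suc L * t\<rfloor> div 2 = int i - 1) * (if even \<lfloor>2 ^ Suc L * t\<rfloor> then 1 else -1))"
proof -
  have sign: "(if q = 2 * int i - 2 then 1 else if q = 2 * int i - 1 then -1 else 0) =
      (of_bool (q div 2 = int i - 1) * (if even q then 1 else -1) :: real)" for q
    unfolding of_bool_def by (cases "even q") (auto, presburger+)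
  show ?thesis
    by (simp only: haar_formula[OF assms] sign)
qed

definition haar_kernel :: "nat \<Rightarrow> real \<Rightarrow> real \<Rightarrow> real" where
  "haar_kernel N t u = (\<Sum>n\<in>{1..2 ^ N}. haar n t * haar n u)"

lemma sum_haar_level:
  assumes "0 \<le> t" "t \<le> 1" "non_dyadic (Suc N) t" "non_dyadic (Suc N) u"
  defines "\<sigma> \<equiv> \<lambda>q::int. if even q then 1 else -1 :: real"
  shows "(\<Sum>i\<in>{1..2 ^ N}. haar (2 ^ N + i) t * haar (2 ^ N + i) u) =
    2 ^ N * (\<sigma> \<lfloor>2 ^ Suc N * t\<rfloor> * \<sigma> \<lfloor>2 ^ Suc N * u\<rfloor>) *
    of_bool (\<lfloor>2 ^ Suc N * t\<rfloor> div 2 = \<lfloor>2 ^ Suc N * u\<rfloor> div 2)"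
proof -
  define qt where "qt = \<lfloor>2 ^ Suc N * t\<rfloor>"
  define qu where "qu = \<lfloor>2 ^ Suc N * u\<rfloor>"
  have "non_dyadic N t"
    using non_dyadic_mono[of N "Suc N" t] assms(3) by simp
  then have "0 \<le> qt div 2" "qt div 2 < 2 ^ N"
    unfolding qt_def floor_half[of N t, symmetric] by (rule non_dyadic_floor_bounds[OF assms(1,2)])+
  then have "nat (qt div 2) + 1 \<in> {1..2 ^ N}"
    by (simp add: nat_less_iff Suc_leI)
  have "(\<Sum>i\<in>{1..2 ^ N}. of_bool (qt div 2 = int i - 1) * of_bool (qu div 2 = int i - 1)) =
      (\<Sum>i\<in>{1..2 ^ N}. if nat (qt div 2) + 1 = i then of_bool (qt div 2 = qu div 2) else (0::real))"
    using \<open>0 \<le> qt div 2\<close> by (intro sum.cong refl) (auto simp: of_bool_def; presburger)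
  with \<open>nat (qt div 2) + 1 \<in> {1..2 ^ N}\<close> have pair:
    "(\<Sum>i\<in>{1..2 ^ N}. of_bool (qt div 2 = int i - 1) * of_bool (qu div 2 = int i - 1)) =
      (of_bool (qt div 2 = qu div 2) :: real)"
    by simp
  have "2 powr (real N / 2) * 2 powr (real N / 2) = (2::real) ^ N"
    by (simp add: powr_add[symmetric] powr_realpow)
  then have "(\<Sum>i\<in>{1..2 ^ N}. haar (2 ^ N + i) t * haar (2 ^ N + i) u) =
      (\<Sum>i\<in>{1..2 ^ N}. 2 ^ N * (\<sigma> qt * \<sigma> qu) * (of_bool (qt div 2 = int i - 1) * of_bool (qu div 2 = int i - 1)))"
    using assms(3,4) by (intro sum.cong refl) (simp add: haar_eq_floor qt_def qu_def \<sigma>_def mult_ac)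
  also have "\<dots> = 2 ^ N * (\<sigma> qt * \<sigma> qu) * of_bool (qt div 2 = qu div 2)"
    by (simp only: sum_distrib_left[symmetric] pair)
  finally show ?thesis
    by (simp only: qt_def qu_def)
qed

lemma haar_kernel_eq:
  assumes "0 \<le> t" "t \<le> 1" "0 \<le> u" "u \<le> 1" "non_dyadic N t" "non_dyadic N u"
  shows "haar_kernel N t u = 2 ^ N * of_bool (\<lfloor>2 ^ N * t\<rfloor> = \<lfloor>2 ^ N * u\<rfloor>)"
  using assms(5,6)
proof (induction N)
  case 0
  then have "\<lfloor>t\<rfloor> = 0" "\<lfloor>u\<rfloor> = 0"
    using non_dyadic_floor_bounds[OF assms(1,2), of 0] non_dyadic_floor_bounds[OF assms(3,4), of 0]
    by (simp_all add: floor_eq_iff)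
  then show ?case
    by (simp add: haar_kernel_def haar_def)
next
  case (Suc N)
  define qt where "qt = \<lfloor>2 ^ Suc N * t\<rfloor>"
  define qu where "qu = \<lfloor>2 ^ Suc N * u\<rfloor>"
  have "haar_kernel (Suc N) t u = haar_kernel N t u + (\<Sum>i\<in>{1..2 ^ N}. haar (2 ^ N + i) t * haar (2 ^ N + i) u)"
    unfolding haar_kernel_def power_Suc mult_2 sum.ub_add_nat[of 1 "2 ^ N", OF le_add2]
    using sum.shift_bounds_cl_nat_ivl[of "\<lambda>n. haar n t * haar n u" 1 "2 ^ N" "2 ^ N"] by (simp add: add.commute)
  also have "haar_kernel N t u = 2 ^ N * of_bool (qt div 2 = qu div 2)"
  proof -
    have "non_dyadic N t" "non_dyadic N u"
      using Suc.prems non_dyadic_mono[of N "Suc N"] by auto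
    then show ?thesis
      using Suc.IH unfolding qt_def qu_def floor_half[of N t] floor_half[of N u] by blast
  qed
  also have "(\<Sum>i\<in>{1..2 ^ N}. haar (2 ^ N + i) t * haar (2 ^ N + i) u) =
      2 ^ N * ((if even qt then 1 else -1) * (if even qu then 1 else -1)) * of_bool (qt div 2 = qu div 2)"
    using sum_haar_level[OF assms(1,2) Suc.prems] by (simp add: qt_def qu_def)
  also have "2 ^ N * of_bool (qt div 2 = qu div 2) +
      2 ^ N * ((if even qt then 1 else -1) * (if even qu then 1 else -1)) * of_bool (qt div 2 = qu div 2) =
      2 ^ Suc N * (of_bool (qt = qu) :: real)"
    unfolding of_bool_def by (auto, presburger+)
  finally show ?case
    by (simp only: qt_def qu_def)
qed

lemma haar_eq_of_same_floor:
  assumes "m \<in> {1..2 ^ N}" "non_dyadic N t" "non_dyadic N t'" "\<lfloor>2 ^ N * t\<rfloor> = \<lfloor>2 ^ N * t'\<rfloor>"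
  shows "haar m t = haar m t'"
proof (cases "m = 1")
  case False
  then have "1 \<le> m - 1"
    using assms(1) by auto
  then obtain L where L: "2 ^ L \<le> m - 1" "m - 1 < 2 ^ Suc L"
    using ex_power_ivl1[of 2 "m - 1"] by auto
  define i where "i = m - 2 ^ L"
  have i: "1 \<le> i" "i \<le> 2 ^ L" "m = 2 ^ L + i"
    using L by (auto simp: i_def)
  then have "2 ^ L + i \<le> (2::nat) ^ N"
    using assms(1) by simp
  then have "(2::nat) ^ L < 2 ^ N"
    using i(1) by linarith
  then have "Suc L + (N - Suc L) = N"
    by simp
  then have "\<lfloor>2 ^ Suc L * x\<rfloor> = \<lfloor>2 ^ N * x\<rfloor> div 2 ^ (N - Suc L)" for x :: real
    using floor_pow2_div[of "Suc L" x "N - Suc L"] by simp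
  moreover have "non_dyadic (Suc L) t" "non_dyadic (Suc L) t'"
    using assms(2,3) \<open>Suc L + (N - Suc L) = N\<close> by (auto intro: non_dyadic_mono[of _ N])
  ultimately show ?thesis
    using assms(4) by (simp add: i(3) haar_eq_floor[OF i(1,2)])
qed (simp add: haar_def)

definition cell_center :: "nat \<Rightarrow> ('d \<Rightarrow> nat) \<Rightarrow> real ^ 'd" where
  "cell_center N j = (\<chi> s. (real (j s) + 1 / 2) / 2 ^ N)"

definition cell_index :: "nat \<Rightarrow> real ^ 'd \<Rightarrow> ('d \<Rightarrow> nat)" where
  "cell_index N x = (\<lambda>s. nat \<lfloor>2 ^ N * x $ s\<rfloor>)"

lemma floor_cell_center: "\<lfloor>2 ^ N * cell_center N j $ s\<rfloor> = int (j s)"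
  by (simp add: cell_center_def floor_eq_iff)

lemma non_dyadic_cell_center:
  assumes "N \<le> M"
  shows "non_dyadic N (cell_center M j $ s)"
proof (rule non_dyadic_mono[OF assms])
  show "non_dyadic M (cell_center M j $ s)"
    unfolding non_dyadic_def
  proof (intro allI notI)
    fix q :: int assume "2 ^ M * cell_center M j $ s = of_int q"
    moreover have "2 ^ M * cell_center M j $ s = real (j s) + 1 / 2"
      by (simp add: cell_center_def)
    ultimately have "2 * real (j s) + 1 = 2 * of_int q"
      by simp
    then have "2 * int (j s) + 1 = 2 * q"
      by linarith
    then show False
      by presburger
  qed
qed

lemma cell_center_in_unit_cube: "j \<in> cells (2 ^ N) \<Longrightarrow> cell_center N j \<in> unit_cube"
  using dyadic_cell_subset_unit_cube[of j N]
  by (auto simp: mem_dyadic_cell cell_center_def divide_right_mono)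

lemma cell_index_cell_center: "cell_index N (cell_center (N + k) j) = (\<lambda>s. j s div 2 ^ k)"
proof -
  have "\<lfloor>2 ^ N * cell_center (N + k) j $ s\<rfloor> = int (j s div 2 ^ k)" for s
    using floor_pow2_div[of N "cell_center (N + k) j $ s" k] by (simp add: floor_cell_center zdiv_int)
  then show ?thesis
    by (simp add: cell_index_def)
qed

lemma cell_index_iff:
  assumes "x \<in> unit_cube"
  shows "j = cell_index N x \<longleftrightarrow> (\<forall>s. int (j s) = \<lfloor>2 ^ N * x $ s\<rfloor>)"
proof
  show "j = cell_index N x \<Longrightarrow> \<forall>s. int (j s) = \<lfloor>2 ^ N * x $ s\<rfloor>"
    using assms by (simp add: cell_index_def mem_unit_cube)
  show "\<forall>s. int (j s) = \<lfloor>2 ^ N * x $ s\<rfloor> \<Longrightarrow> j = cell_index N x"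
    by (simp add: cell_index_def fun_eq_iff) (metis nat_int)
qed

lemma cell_index_mem_cells:
  assumes "x \<in> unit_cube" "\<And>s. non_dyadic N (x $ s)"
  shows "cell_index N x \<in> cells (2 ^ N)"
  using assms non_dyadic_floor_bounds[of "x $ _" N] by (auto simp: cells_iff cell_index_def mem_unit_cube nat_less_iff)

lemma mem_dyadic_cell_iff_cell_index:
  assumes "x \<in> unit_cube" "\<And>s. non_dyadic N (x $ s)"
  shows "x \<in> dyadic_cell N j \<longleftrightarrow> j = cell_index N x"
proof -
  have "real (j s) / 2 ^ N \<le> x $ s \<and> x $ s \<le> (real (j s) + 1) / 2 ^ N \<longleftrightarrow> int (j s) = \<lfloor>2 ^ N * x $ s\<rfloor>" for s
  proof -
    have "2 ^ N * x $ s \<noteq> real (j s) + 1"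
      using assms(2)[of s, unfolded non_dyadic_def, rule_format, of "int (j s) + 1"] by simp
    then have "real (j s) / 2 ^ N \<le> x $ s \<and> x $ s \<le> (real (j s) + 1) / 2 ^ N \<longleftrightarrow>
        real (j s) \<le> 2 ^ N * x $ s \<and> 2 ^ N * x $ s < real (j s) + 1"
      by (auto simp: divide_le_eq le_divide_eq mult.commute)
    also have "\<dots> \<longleftrightarrow> int (j s) = \<lfloor>2 ^ N * x $ s\<rfloor>"
      by (simp add: floor_eq_iff eq_commute[of "int (j s)"])
    finally show ?thesis .
  qed
  then show ?thesis
    by (simp add: mem_dyadic_cell cell_index_iff[OF assms(1)])
qed

lemma haar_d_kernel:
  "(\<Sum>n\<in>Pi\<^sub>E UNIV (\<lambda>_. {1..2 ^ N}). haar_d n x * haar_d n z) = (\<Prod>s\<in>UNIV. haar_kernel N (x $ s) (z $ s))"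
  for x z :: "real ^ 'd::finite"
  unfolding haar_d_def haar_kernel_def prod.distrib[symmetric] by (rule prod_sum_PiE[symmetric]) auto

lemma haar_d_kernel_cell_center:
  fixes x :: "real ^ 'd::finite"
  assumes "j \<in> cells (2 ^ N)" "x \<in> unit_cube" "\<And>s. non_dyadic N (x $ s)"
  shows "(\<Sum>n\<in>Pi\<^sub>E UNIV (\<lambda>_. {1..2 ^ N}). haar_d n (cell_center N j) * haar_d n x) =
    2 ^ (N * CARD('d)) * of_bool (j = cell_index N x)"
proof -
  have "haar_kernel N (cell_center N j $ s) (x $ s) = 2 ^ N * of_bool (int (j s) = \<lfloor>2 ^ N * x $ s\<rfloor>)" for s
    using haar_kernel_eq[of "cell_center N j $ s" "x $ s" N] cell_center_in_unit_cube[OF assms(1)] assms(2,3)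
    by (auto simp: mem_unit_cube non_dyadic_cell_center floor_cell_center)
  then have "(\<Sum>n\<in>Pi\<^sub>E UNIV (\<lambda>_. {1..2 ^ N}). haar_d n (cell_center N j) * haar_d n x) =
      (\<Prod>s\<in>UNIV. 2 ^ N * of_bool (int (j s) = \<lfloor>2 ^ N * x $ s\<rfloor>))"
    by (simp only: haar_d_kernel)
  also have "\<dots> = 2 ^ (N * CARD('d)) * of_bool (\<forall>s. int (j s) = \<lfloor>2 ^ N * x $ s\<rfloor>)"
    by (simp add: prod.distrib prod_of_bool power_mult)
  finally show ?thesis
    by (simp only: cell_index_iff[OF assms(2)])
qed

lemma haar_d_eq_at_cell_center:
  assumes "n \<in> Pi\<^sub>E UNIV (\<lambda>_. {1..2 ^ N})" "x \<in> unit_cube" "\<And>s. non_dyadic N (x $ s)"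
  shows "haar_d n x = haar_d n (cell_center N (cell_index N x))"
  unfolding haar_d_def
proof (intro prod.cong refl haar_eq_of_same_floor)
  fix s
  show "\<lfloor>2 ^ N * x $ s\<rfloor> = \<lfloor>2 ^ N * cell_center N (cell_index N x) $ s\<rfloor>"
    using cell_index_iff[OF assms(2), of "cell_index N x" N] by (simp add: floor_cell_center)
qed (use assms in \<open>auto simp: non_dyadic_cell_center\<close>)

definition dyadic_grid :: "nat \<Rightarrow> (real ^ 'd) set" where
  "dyadic_grid N = {x. \<exists>s. \<exists>q\<in>{0..(2::nat) ^ N}. x $ s = real q / 2 ^ N}"

lemma negligible_dyadic_grid: "negligible (dyadic_grid N :: (real ^ 'd::finite) set)"
proof -
  have "dyadic_grid N = (\<Union>(s, q)\<in>UNIV \<times> {0..2 ^ N}. {x :: real ^ 'd. x \<bullet> axis s 1 = real q / 2 ^ N})"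
    by (auto simp: dyadic_grid_def cart_eq_inner_axis[symmetric])
  also have "negligible \<dots>"
    by (rule negligible_Union) (auto intro!: negligible_standard_hyperplane)
  finally show ?thesis .
qed

lemma non_dyadic_off_grid:
  assumes "x \<in> unit_cube" "x \<notin> dyadic_grid N"
  shows "non_dyadic N (x $ s)"
  unfolding non_dyadic_def
proof (intro allI notI)
  fix q :: int assume q: "2 ^ N * x $ s = of_int q"
  have "0 \<le> x $ s" "x $ s \<le> 1"
    using assms(1) by (auto simp: mem_unit_cube)
  then have "0 \<le> (2::real) ^ N * x $ s" "(2::real) ^ N * x $ s \<le> 2 ^ N"
    by (simp_all add: mult_le_cancel_left1)
  then have "real_of_int 0 \<le> real_of_int q" "real_of_int q \<le> real_of_int (2 ^ N)"
    using q by simp_all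
  then have "0 \<le> q" "q \<le> 2 ^ N"
    by (simp_all only: of_int_le_iff)
  then have "nat q \<in> {0..(2::nat) ^ N}" "x $ s = real (nat q) / 2 ^ N"
    using q by (simp_all add: nat_le_iff field_simps)
  then show False
    using assms(2) unfolding dyadic_grid_def by blast
qed

lemma haar_coeff_eq:
  fixes f :: "real ^ 'd::finite \<Rightarrow> real"
  assumes "continuous_on unit_cube f" "n \<in> Pi\<^sub>E UNIV (\<lambda>_. {1..2 ^ N})"
  shows "haar_coeff n f = (\<Sum>j\<in>cells (2 ^ N). haar_d n (cell_center N j) * integral (dyadic_cell N j) f)"
proof -
  define g where "g x = (\<Sum>j\<in>cells (2 ^ N). haar_d n (cell_center N j) * (if x \<in> dyadic_cell N j then f x else 0))" for x
  have "(g has_integral (\<Sum>j\<in>cells (2 ^ N). haar_d n (cell_center N j) * integral (dyadic_cell N j) f)) unit_cube"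
    unfolding g_def
  proof (intro has_integral_sum finite_cells has_integral_mult_right)
    fix j :: "'d \<Rightarrow> nat" assume j: "j \<in> cells (2 ^ N)"
    then have "(f has_integral integral (dyadic_cell N j) f) (dyadic_cell N j \<inter> unit_cube)"
      using integrable_on_dyadic_cell[OF assms(1) j] dyadic_cell_subset_unit_cube[OF j]
      by (simp add: Int_absorb2 integrable_integral)
    then show "((\<lambda>x. if x \<in> dyadic_cell N j then f x else 0) has_integral integral (dyadic_cell N j) f) unit_cube"
      by (simp only: has_integral_restrict_Int)
  qed
  moreover have "g x = f x * haar_d n x" if "x \<in> unit_cube - dyadic_grid N" for x
  proof -
    have x: "x \<in> unit_cube" "\<And>s. non_dyadic N (x $ s)"
      using that non_dyadic_off_grid by auto
    have "g x = (\<Sum>j\<in>cells (2 ^ N). if cell_index N x = j then haar_d n (cell_center N j) * f x else 0)"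
      unfolding g_def by (intro sum.cong refl) (auto simp: mem_dyadic_cell_iff_cell_index[OF x])
    also have "\<dots> = f x * haar_d n x"
      using cell_index_mem_cells[OF x] haar_d_eq_at_cell_center[OF assms(2) x] by simp
    finally show ?thesis .
  qed
  ultimately have "((\<lambda>x. f x * haar_d n x) has_integral
      (\<Sum>j\<in>cells (2 ^ N). haar_d n (cell_center N j) * integral (dyadic_cell N j) f)) unit_cube"
    using has_integral_spike[OF negligible_dyadic_grid] by (metis (no_types, lifting))
  then show ?thesis
    unfolding haar_coeff_def by (rule integral_unique)
qed

theorem haar_partial_eq_cell_avg:
  fixes f :: "real ^ 'd::finite \<Rightarrow> real"
  assumes "continuous_on unit_cube f" "x \<in> unit_cube" "\<And>s. non_dyadic N (x $ s)"
  shows "haar_partial N f x = cell_avg N f (cell_index N x)"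
proof -
  define I where "I j = integral (dyadic_cell N j) f" for j
  have "haar_partial N f x = (\<Sum>n\<in>Pi\<^sub>E UNIV (\<lambda>_. {1..2 ^ N}). \<Sum>j\<in>cells (2 ^ N). I j * (haar_d n (cell_center N j) * haar_d n x))"
    unfolding haar_partial_def
    by (intro sum.cong refl) (simp add: haar_coeff_eq[OF assms(1)] I_def sum_distrib_left sum_distrib_right mult_ac)
  also have "\<dots> = (\<Sum>j\<in>cells (2 ^ N). I j * (\<Sum>n\<in>Pi\<^sub>E UNIV (\<lambda>_. {1..2 ^ N}). haar_d n (cell_center N j) * haar_d n x))"
    by (subst sum.swap) (simp add: sum_distrib_left)
  also have "\<dots> = (\<Sum>j\<in>cells (2 ^ N). 2 ^ (N * CARD('d)) * I j * of_bool (j = cell_index N x))"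
    using assms(2,3) by (intro sum.cong refl) (simp only: haar_d_kernel_cell_center, simp only: mult_ac)
  also have "\<dots> = cell_avg N f (cell_index N x)"
    using cell_index_mem_cells[OF assms(2,3)] by (simp add: sum_mult_of_bool_eq_point cell_avg_def I_def)
  finally show ?thesis .
qed

section \<open>Continuity of the version\<close>

lemma dyadic_int_haar_partial:
  assumes "continuous_on unit_cube f"
  shows "dyadic_int F (N + k) (haar_partial N f) y = stieltjes_sum F f N y"
proof -
  have "haar_partial N f (cell_center (N + k) j) = cell_avg N f (\<lambda>s. j s div 2 ^ k)"
    if "j \<in> cells (2 ^ (N + k))" for j
    using haar_partial_eq_cell_avg[OF assms cell_center_in_unit_cube[OF that]]
    by (simp add: non_dyadic_cell_center cell_index_cell_center)
  then show ?thesis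
    unfolding stieltjes_sum_refine[of F f N y k] dyadic_int_def cells_def[symmetric]
    by (intro sum.cong refl) (simp add: rect_incr_grid_pt cell_center_def[symmetric])
qed

lemma xi_term_eq:
  assumes "continuous_on unit_cube f"
  shows "xi_term F f k y = stieltjes_sum F f (Suc k) y - stieltjes_sum F f k y"
proof -
  have "dyadic_int F (Suc k) (\<lambda>x. haar_partial (Suc k) f x - haar_partial k f x) y =
      dyadic_int F (Suc k) (haar_partial (Suc k) f) y - dyadic_int F (Suc k) (haar_partial k f) y"
    by (simp add: dyadic_int_def left_diff_distrib sum_subtractf)
  then show ?thesis
    using dyadic_int_haar_partial[OF assms, of F "Suc k" 0 y] dyadic_int_haar_partial[OF assms, of F k 1 y]
    by (simp add: xi_term_def)
qed

lemma uniformly_continuous_on_unit_cube_dyadic: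
  fixes f :: "real ^ 'd::finite \<Rightarrow> real"
  assumes "continuous_on unit_cube f" "0 < \<eta>"
  obtains N0 where "\<And>N x x'. N0 \<le> N \<Longrightarrow> x \<in> unit_cube \<Longrightarrow> x' \<in> unit_cube \<Longrightarrow>
    (\<forall>s. \<bar>x $ s - x' $ s\<bar> \<le> 1 / 2 ^ N) \<Longrightarrow> \<bar>f x - f x'\<bar> \<le> \<eta>"
proof -
  obtain r where r: "0 < r" "\<And>x x'. x \<in> unit_cube \<Longrightarrow> x' \<in> unit_cube \<Longrightarrow> dist x' x < r \<Longrightarrow> dist (f x') (f x) < \<eta>"
    using compact_uniformly_continuous[OF assms(1) compact_unit_cube] assms(2)
    unfolding uniformly_continuous_on_def by metis
  obtain N0 where N0: "real CARD('d) / r < 2 ^ N0"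
    using real_arch_pow[of 2 "real CARD('d) / r"] by auto
  show ?thesis
  proof (rule that)
    fix N and x x' :: "real ^ 'd" assume N: "N0 \<le> N" and x: "x \<in> unit_cube" "x' \<in> unit_cube" "\<forall>s. \<bar>x $ s - x' $ s\<bar> \<le> 1 / 2 ^ N"
    have "dist x x' \<le> (\<Sum>s\<in>UNIV. \<bar>(x - x') $ s\<bar>)"
      unfolding dist_norm by (rule norm_le_l1_cart)
    also have "\<dots> \<le> (\<Sum>s\<in>(UNIV :: 'd set). 1 / 2 ^ N)"
      by (intro sum_mono) (use x(3) in simp)
    also have "\<dots> \<le> real CARD('d) / 2 ^ N0"
      using N by (simp add: divide_left_mono power_increasing)
    also have "\<dots> < r"
      using N0 r(1) by (simp add: divide_less_eq mult.commute)
    finally show "\<bar>f x - f x'\<bar> \<le> \<eta>"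
      using r(2)[OF x(2,1)] by (simp add: dist_commute dist_real_def)
  qed
qed

lemma uniformly_Cauchy_onI_tail:
  fixes f :: "nat \<Rightarrow> 'a \<Rightarrow> real"
  assumes "\<And>e. 0 < e \<Longrightarrow> \<exists>N0. \<forall>N\<ge>N0. \<forall>l. \<forall>x\<in>X. \<bar>f (N + l) x - f N x\<bar> < e"
  shows "uniformly_Cauchy_on X f"
proof (rule uniformly_Cauchy_onI')
  fix e :: real assume "0 < e"
  then obtain N0 where N0: "\<And>N l x. N0 \<le> N \<Longrightarrow> x \<in> X \<Longrightarrow> \<bar>f (N + l) x - f N x\<bar> < e"
    using assms by blast
  have "dist (f m x) (f n x) < e" if "x \<in> X" "N0 \<le> m" "m < n" for x m n
    using N0[OF that(2,1), of "n - m"] that(3) by (simp add: dist_real_def abs_minus_commute)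
  then show "\<exists>N0. \<forall>x\<in>X. \<forall>m\<ge>N0. \<forall>n>m. dist (f m x) (f n x) < e"
    by blast
qed

context bounded_mixed_derivatives
begin

lemma stieltjes_sum_uniformly_Cauchy:
  assumes "continuous_on unit_cube F"
  shows "uniformly_Cauchy_on unit_cube (stieltjes_sum F (D (mixed_index {})))"
proof (rule uniformly_Cauchy_onI_tail)
  fix e :: real assume "0 < e"
  define f where "f = D (mixed_index {})"
  define C where "C = 4 ^ CARD('d) * M"
  define \<delta> where "\<delta> = e / (4 * (C + 1))"
  have "0 \<le> C"
    using M_nonneg by (simp add: C_def)
  then have "0 < \<delta>"
    using \<open>0 < e\<close> by (simp add: \<delta>_def)
  obtain L G where L: "0 \<le> L" "mixed_lipschitz L G" and G: "\<And>x. x \<in> unit_cube \<Longrightarrow> \<bar>F x - G x\<bar> \<le> \<delta>"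
    using mixed_lipschitz_dense[OF assms \<open>0 < \<delta>\<close>] by metis
  define \<eta> where "\<eta> = e / (4 * (L + 1))"
  have "0 < \<eta>"
    using \<open>0 < e\<close> L(1) by (simp add: \<eta>_def)
  obtain N0 where N0: "\<And>N x x'. N0 \<le> N \<Longrightarrow> x \<in> unit_cube \<Longrightarrow> x' \<in> unit_cube \<Longrightarrow>
      (\<forall>s. \<bar>x $ s - x' $ s\<bar> \<le> 1 / 2 ^ N) \<Longrightarrow> \<bar>f x - f x'\<bar> \<le> \<eta>"
    using uniformly_continuous_on_unit_cube_dyadic[OF continuous_on_mixed[of "{}", folded f_def] \<open>0 < \<eta>\<close>] by metis
  have "\<bar>stieltjes_sum F f (N + l) y - stieltjes_sum F f N y\<bar> < e" if "N0 \<le> N" "y \<in> unit_cube" for N l y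
  proof -
    have "\<bar>stieltjes_sum (\<lambda>x. F x - G x) f K y\<bar> \<le> C * \<delta>" for K
      unfolding f_def C_def using stieltjes_sum_bound[OF that(2), of "\<lambda>x. F x - G x" \<delta> K] G by simp
    then have FG: "\<bar>stieltjes_sum F f K y - stieltjes_sum G f K y\<bar> \<le> C * \<delta>" for K
      by (simp add: stieltjes_sum_diff)
    have "\<bar>stieltjes_sum G f (N + l) y - stieltjes_sum G f N y\<bar> \<le> 2 * \<eta> * L"
      using L that continuous_on_mixed N0[OF that(1)] unfolding f_def by (intro stieltjes_sum_refine_close) auto
    moreover have "C * \<delta> \<le> e / 4" "2 * \<eta> * L < e / 2"
      using \<open>0 \<le> C\<close> \<open>0 < e\<close> L(1) by (simp_all add: \<delta>_def \<eta>_def field_simps)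
    ultimately show ?thesis
      using FG[of "N + l"] FG[of N] by linarith
  qed
  then show "\<exists>N0. \<forall>N\<ge>N0. \<forall>l. \<forall>y\<in>unit_cube. \<bar>stieltjes_sum F f (N + l) y - stieltjes_sum F f N y\<bar> < e"
    by blast
qed

end

lemma cont_diff_cube_bounded_mixed_derivatives:
  fixes f :: "real ^ 'd::finite \<Rightarrow> real"
  assumes "cont_diff_cube CARD('d) f"
  obtains D M where "bounded_mixed_derivatives D M" "D (mixed_index {}) = f"
proof -
  obtain D where D0: "D (\<lambda>_. 0) = f"
    and D_cont: "\<And>\<alpha>. sum \<alpha> UNIV \<le> CARD('d) \<Longrightarrow> continuous_on unit_cube (D \<alpha>)"
    and D_deriv: "\<And>\<alpha> s x. sum \<alpha> UNIV < CARD('d) \<Longrightarrow> x \<in> unit_cube \<Longrightarrow>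
          ((\<lambda>t. D \<alpha> (x + t *\<^sub>R axis s 1)) has_real_derivative D (\<alpha>(s := Suc (\<alpha> s))) x)
            (at 0 within {t. x + t *\<^sub>R axis s 1 \<in> unit_cube})"
    using assms unfolding cont_diff_cube_def by blast
  have "\<exists>B. \<forall>x\<in>unit_cube. \<bar>D (mixed_index U) x\<bar> \<le> B" for U
  proof -
    have "continuous_on unit_cube (D (mixed_index U))"
      by (rule D_cont) (simp add: sum_mixed_index card_mono)
    then have "bounded (D (mixed_index U) ` unit_cube)"
      by (intro compact_imp_bounded compact_continuous_image) simp_all
    then show ?thesis
      by (auto simp: bounded_real)
  qed
  then obtain B where B: "\<And>U x. x \<in> unit_cube \<Longrightarrow> \<bar>D (mixed_index U) x\<bar> \<le> B U"
    by metis
  have "\<bar>D (mixed_index U) x\<bar> \<le> (\<Sum>U\<in>UNIV. \<bar>B U\<bar>)" if "x \<in> unit_cube" for U x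
    using B[OF that, of U] member_le_sum[of U UNIV "\<lambda>U. \<bar>B U\<bar>"] by simp
  then have "bounded_mixed_derivatives D (\<Sum>U\<in>UNIV. \<bar>B U\<bar>)"
    using D_cont D_deriv by unfold_locales auto
  moreover have "D (mixed_index {}) = f"
    using D0 by (simp add: mixed_index_def)
  ultimately show ?thesis
    by (rule that)
qed

theorem xi_tilde_continuous:
  fixes F f :: "real ^ 'd::finite \<Rightarrow> real"
  assumes "continuous_on unit_cube F" "cont_diff_cube CARD('d) f"
  shows "(\<forall>y\<in>unit_cube. summable (\<lambda>k. xi_term F f k y)) \<and> continuous_on unit_cube (xi_tilde F f)"
proof -
  obtain D M where D: "bounded_mixed_derivatives D M" "D (mixed_index {}) = f"
    using cont_diff_cube_bounded_mixed_derivatives[OF assms(2)] by metis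
  then have f: "continuous_on unit_cube f"
    using bounded_mixed_derivatives.continuous_on_mixed by metis
  have "uniformly_Cauchy_on unit_cube (stieltjes_sum F f)"
    using bounded_mixed_derivatives.stieltjes_sum_uniformly_Cauchy[OF D(1) assms(1)] D(2) by simp
  then obtain g where g: "uniform_limit unit_cube (stieltjes_sum F f) g sequentially"
    using Cauchy_uniformly_convergent uniformly_convergent_on_def by blast
  have sums: "(\<lambda>k. xi_term F f k y) sums (g y - stieltjes_sum F f 0 y)" if "y \<in> unit_cube" for y
  proof -
    have "(\<lambda>N. stieltjes_sum F f N y - stieltjes_sum F f 0 y) \<longlonglongrightarrow> g y - stieltjes_sum F f 0 y"
      by (intro tendsto_intros tendsto_uniform_limitI[OF g that])
    then show ?thesis
      using sum_lessThan_telescope[of "\<lambda>k. stieltjes_sum F f k y"] by (simp add: sums_def xi_term_eq[OF f])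
  qed
  have "continuous_on unit_cube g"
    by (rule uniform_limit_theorem[OF _ g]) (simp_all add: continuous_on_stieltjes_sum assms(1))
  moreover have "g y = xi_tilde F f y" if "y \<in> unit_cube" for y
    using dyadic_int_haar_partial[OF f, of F 0 0 y] sums_unique[OF sums[OF that]] by (simp add: xi_tilde_def)
  ultimately have "continuous_on unit_cube (xi_tilde F f)"
    by (rule continuous_on_eq)
  then show ?thesis
    using sums summable_def by blast
qed

theorem theorem4:
  fixes P :: "'w measure"
    and \<mu> :: "(real ^ 'd) set \<Rightarrow> 'w \<Rightarrow> real"
    and \<mu>c :: "real ^ 'd \<Rightarrow> 'w \<Rightarrow> real"
    and f :: "real ^ 'd \<Rightarrow> real"
  assumes "prob_space P" and "complete_measure P"
    and SM: "stochastic_measure P (restrict_space borel unit_cube) \<mu>"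
    and A2_version: "\<forall>x\<in>unit_cube. AE w in P. \<mu>c x w = \<mu> (cbox 0 x) w"
    and A2_cont: "AE w in P. continuous_on unit_cube (\<lambda>x. \<mu>c x w)"
    and A3: "CARD('d) \<ge> 2 \<longrightarrow>
       (AE w in P. summable (\<lambda>k. real (Suc k) ^ (CARD('d) - 2) *
                                  modulus (\<lambda>x. \<mu>c x w) (2 powr - real (Suc k))))"
    and f_smooth: "cont_diff_cube CARD('d) f"
  shows "AE w in P. (\<forall>y\<in>unit_cube. summable (\<lambda>k. xi_term (\<lambda>x. \<mu>c x w) f k y)) \<and>
                     continuous_on unit_cube (xi_tilde (\<lambda>x. \<mu>c x w) f)"
  using A2_cont by (rule eventually_mono) (rule xi_tilde_continuous[OF _ f_smooth])

end
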